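(* (1) Let $k\geq 2$ and let $(\mathscr{G}_k^{(m)})_{m\geq k}$ be a family of CNOT circuits such that each $\mathscr{G}_k^{(m)}$ is a clean special $k$-body generator on $m$ qubits. Then for $n\geq k$ the circuit $$\mathcal{G}_k^{(n)}:=\mathscr{G}_k^{(n)}\odot\mathscr{G}_k^{(2,n)}\odot\cdots\odot\mathscr{G}_k^{(n-k+1,n)}$$ is a $k$-body generator. (2) Let $k_0\geq 2$ and let $(\mathscr{G}_{k_0}^{(n)})_{n\geq k_0}$ be a family of clean special $k_0$-body generators. For $k>k_0$ and $n\geq k$ define recursively $\mathscr{G}_k^{(n)}:=W_k^{(n)}\odot \mathrm{CX}_{n-k+1,n-k+2}\odot\overline{\mathrm{PTC}}^{(1,n-k+1)}$, where $W_k^{(k)}:=\mathrm{CX}_{1,2}\odot\mathscr{G}_{k-1}^{(2,k)}$ and, for $n>k$, $W_k^{(n)}:=\mathrm{CX}_{1,2}\odot\mathscr{G}_{k-1}^{(2,n)}\odot\mathrm{SW}_{1,2}\odot W_k^{(2,n)}$; and define $\mathcal{G}_k^{(n)}$ from $\mathscr{G}_k$ as in (1). Then for every $k>k_0$, $\mathscr{G}_k^{(n)}$ is a clean special $k$-body generator and $\mathcal{G}_k^{(n)}$ is a $k$-body generator. Moreover, if $\operatorname{size}(\mathscr{G}_{k_0}^{(n)})=c_1n^{k_0-1}+\mathcal{O}(n^{k_0-2})$ and $D(\mathscr{G}_{k_0}^{(n)})=c_2n^{k_0-2}+\mathcal{O}(n^{k_0-3})$ for constants $c_1,c_2>0$,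 then $$\operatorname{size}(\mathcal{G}_k^{(n)})=c_1\frac{(k_0-1)!}{k!}n^{k}+\mathcal{O}(n^{k-1}),\qquad D(\mathcal{G}_k^{(n)})=c_2\frac{(k_0-2)!}{(k-1)!}n^{k-1}+\mathcal{O}(n^{k-2}).$$
   Context: Qubits are indexed $1,\ldots,n$; $\mathrm{CX}_{i,j}$ ($i\neq j$) is the CNOT gate with control $i$, target $j$. A CNOT circuit is a finite sequence of moments, each a set of CNOT gates on pairwise disjoint qubits; $D(C)$ is the number of moments and $\operatorname{size}(C)$ the number of gates. A single gate also denotes the one-moment circuit containing it. $C_1\odot C_2$ is the circuit consisting of the moments of $C_1$ followed by those of $C_2$. If $C^{(m)}$ is a circuit on qubits $1,\ldots,m$, then for $q-p+1=m$, $C^{(p,q)}$ is obtained by replacing every gate $\mathrm{CX}_{i,j}$ by $\mathrm{CX}_{i+p-1,j+p-1}$; $\overline{C}^{(p,q)}$ is obtained from $C^{(p,q)}$ (same moments) by replacing every gate $\mathrm{CX}_{i,j}$ by $\mathrm{CX}_{p+q-i,p+q-j}$. $\mathrm{DX}_{c,t}:=\mathrm{CX}_{t,c}\odot\mathrm{CX}_{c,t}$, $\mathrm{SW}_{c,t}:=\mathrm{CX}_{c,t}\odot\mathrm{CX}_{t,c}\odot\mathrm{CX}_{c,t}$, and $\mathrm{PTC}^{(m)}:=\mathrm{DX}_{1,2}\odot\cdots\odot\mathrm{DX}_{m-1,m}$ ($\mathrm{PTC}^{(1)}$ empty). A label is a subset of $\{1,\ldots,n\}$; $ab$ is the symmetric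 difference of labels. A label sequence $\ell=(\ell_1,\ldots,\ell_n)$ is acted on from the right: $\ell\,\mathrm{CX}_{i,j}$ replaces $\ell_j$ by $\ell_i\ell_j$; a moment applies its gates, a circuit its moments in order. With $C_{1,m}$ the first $m$ moments, $C$ generates a label $\lambda$ from $\ell$ if $\lambda$ is an entry of $\ell C_{1,m}$ for some $m\in\{1,\ldots,D(C)\}$. Let $\ell^0=(\{1\},\ldots,\{n\})$. A CNOT circuit on $n\geq k$ qubits is a $k$-body generator if it generates from $\ell^0$ every $k$-element subset of $\{1,\ldots,n\}$. It is a clean special $k$-body generator if (i) it generates from $\ell^0$ every label $\{1,i_1,\ldots,i_{k-1}\}$ with $1<i_1<\cdots<i_{k-1}\leq n$, and (ii) there is a permutation $\pi$ of $\{1,\ldots,n\}$ with $\pi(1)=1$ such that $\ell^0C=(\{\pi(1)\},\ldots,\{\pi(n)\})$. *)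

theory Defs
  imports Main "HOL-Library.Landau_Symbols"
begin

text \<open>A gate CX_{i,j} is the pair (i,j); a moment is a set of gates; a circuit is a list of moments.\<close>
type_synonym gate = "nat \<times> nat"
type_synonym moment = "gate set"
type_synonym circuit = "moment list"

definition is_circuit :: "nat \<Rightarrow> circuit \<Rightarrow> bool" where
  "is_circuit n C \<longleftrightarrow> (\<forall>M \<in> set C.
      (\<forall>(i,j) \<in> M. i \<noteq> j \<and> i \<in> {1..n} \<and> j \<in> {1..n}) \<and>
      (\<forall>g \<in> M. \<forall>g' \<in> M. g \<noteq> g' \<longrightarrow> {fst g, snd g} \<inter> {fst g', snd g'} = {}))"

definition depth :: "circuit \<Rightarrow> nat" where "depth C = length C"
definition csize :: "circuit \<Rightarrow> nat" where "csize C = (\<Sum>M \<leftarrow> C. card M)"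

definition CX :: "nat \<Rightarrow> nat \<Rightarrow> circuit" where "CX i j = [{(i,j)}]"
definition DX :: "nat \<Rightarrow> nat \<Rightarrow> circuit" where "DX c t = CX t c @ CX c t"
definition SW :: "nat \<Rightarrow> nat \<Rightarrow> circuit" where "SW c t = CX c t @ CX t c @ CX c t"
definition PTC :: "nat \<Rightarrow> circuit" where "PTC m = concat (map (\<lambda>i. DX i (i+1)) [1..<m])"

definition map_gates :: "(nat \<Rightarrow> nat) \<Rightarrow> circuit \<Rightarrow> circuit" where
  "map_gates f C = map (\<lambda>M. (\<lambda>(i,j). (f i, f j)) ` M) C"

text \<open>C^{(p,q)} (shift by p-1) and its reflection overline{C}^{(p,q)}.\<close>
definition shift :: "nat \<Rightarrow> circuit \<Rightarrow> circuit" where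
  "shift p C = map_gates (\<lambda>i. i + p - 1) C"
definition refl :: "nat \<Rightarrow> nat \<Rightarrow> circuit \<Rightarrow> circuit" where
  "refl p q C = map_gates (\<lambda>i. p + q - i) (shift p C)"

text \<open>Labels: sets of qubits; product = symmetric difference. Label sequences: nat \<Rightarrow> nat set (entries 1..n).\<close>
definition labmul :: "nat set \<Rightarrow> nat set \<Rightarrow> nat set" where
  "labmul a b = (a - b) \<union> (b - a)"

definition apply_moment :: "moment \<Rightarrow> (nat \<Rightarrow> nat set) \<Rightarrow> (nat \<Rightarrow> nat set)" where
  "apply_moment M l = (\<lambda>q. if \<exists>i. (i,q) \<in> M then labmul (l (THE i. (i,q) \<in> M)) (l q) else l q)"

definition apply_circ :: "circuit \<Rightarrow> (nat \<Rightarrow> nat set) \<Rightarrow> (nat \<Rightarrow> nat set)" where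
  "apply_circ C l = fold apply_moment C l"

definition l0 :: "nat \<Rightarrow> nat set" where "l0 q = {q}"

definition generated :: "nat \<Rightarrow> circuit \<Rightarrow> (nat \<Rightarrow> nat set) \<Rightarrow> nat set set" where
  "generated n C l = {apply_circ (take m C) l q | m q. 1 \<le> m \<and> m \<le> length C \<and> q \<in> {1..n}}"

definition k_body_gen :: "nat \<Rightarrow> nat \<Rightarrow> circuit \<Rightarrow> bool" where
  "k_body_gen k n C \<longleftrightarrow> is_circuit n C \<and> n \<ge> k \<and>
     (\<forall>S. S \<subseteq> {1..n} \<and> card S = k \<longrightarrow> S \<in> generated n C l0)"

definition clean_special :: "nat \<Rightarrow> nat \<Rightarrow> circuit \<Rightarrow> bool" where
  "clean_special k n C \<longleftrightarrow> is_circuit n C \<and> n \<ge> k \<and>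
     (\<forall>S. S \<subseteq> {2..n} \<and> card S = k - 1 \<longrightarrow> insert 1 S \<in> generated n C l0) \<and>
     (\<exists>\<pi>. bij_betw \<pi> {1..n} {1..n} \<and> \<pi> 1 = 1 \<and> (\<forall>q \<in> {1..n}. apply_circ C l0 q = {\<pi> q}))"

text \<open>Construction (1): G^{(n)} \<odot> G^{(2,n)} \<odot> ... \<odot> G^{(n-k+1,n)}, where G^{(p,n)} is G^{(n-p+1)} shifted.\<close>
definition full_gen :: "(nat \<Rightarrow> circuit) \<Rightarrow> nat \<Rightarrow> nat \<Rightarrow> circuit" where
  "full_gen G k n = concat (map (\<lambda>p. shift p (G (n - p + 1))) [1..<n - k + 2])"

text \<open>W_k^{(k+d)} given the level-(k-1) family F.\<close>
primrec Wc :: "(nat \<Rightarrow> circuit) \<Rightarrow> nat \<Rightarrow> nat \<Rightarrow> circuit" where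
  "Wc F k 0 = CX 1 2 @ shift 2 (F (k - 1))"
| "Wc F k (Suc d) = CX 1 2 @ shift 2 (F (k + Suc d - 1)) @ SW 1 2 @ shift 2 (Wc F k d)"

definition W :: "(nat \<Rightarrow> circuit) \<Rightarrow> nat \<Rightarrow> nat \<Rightarrow> circuit" where
  "W F k n = Wc F k (n - k)"

text \<open>special_gen G0 k0 d n = scr G_{k0+d}^{(n)}.\<close>
primrec special_gen :: "(nat \<Rightarrow> circuit) \<Rightarrow> nat \<Rightarrow> nat \<Rightarrow> nat \<Rightarrow> circuit" where
  "special_gen G0 k0 0 = G0"
| "special_gen G0 k0 (Suc d) = (\<lambda>n. let k = k0 + Suc d in
      W (special_gen G0 k0 d) k n @ CX (n - k + 1) (n - k + 2) @ refl 1 (n - k + 1) (PTC (n - k + 1)))"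

end

theory Submission
  imports Defs
begin

section \<open>Labels and linearity\<close>

lemma labmul_cancel [simp]:
  "labmul a (labmul a b) = b" "labmul (labmul a b) b = a"
  "labmul (labmul a b) a = b" "labmul b (labmul a b) = a"
  unfolding labmul_def by auto

lemma labmul_commute: "labmul a b = labmul b a"
  unfolding labmul_def by auto

lemma labmul_disjoint: "a \<inter> b = {} \<Longrightarrow> labmul a b = a \<union> b"
  unfolding labmul_def by auto

lemma finite_labmul: "finite a \<Longrightarrow> finite b \<Longrightarrow> finite (labmul a b)"
  unfolding labmul_def by auto

lemma apply_circ_Nil [simp]: "apply_circ [] l = l"
  by (simp add: apply_circ_def)

lemma apply_circ_Cons [simp]: "apply_circ (M # C) l = apply_circ C (apply_moment M l)"
  by (simp add: apply_circ_def)

lemma apply_circ_append [simp]: "apply_circ (A @ B) l = apply_circ B (apply_circ A l)"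
  by (simp add: apply_circ_def)

lemma apply_CX [simp]: "apply_circ (CX i j) l = l(j := labmul (l i) (l j))"
  by (rule ext) (simp add: CX_def apply_moment_def)

lemma apply_SW: "a \<noteq> b \<Longrightarrow> apply_circ (SW a b) l = l(a := l b, b := l a)"
  unfolding SW_def by (auto simp: fun_eq_iff labmul_commute)

lemma apply_DX: "c \<noteq> t \<Longrightarrow> apply_circ (DX c t) l = l(c := labmul (l t) (l c), t := l c)"
  unfolding DX_def by (auto simp: fun_eq_iff labmul_commute)

lemma generated_append_left: "X \<in> generated n A l \<Longrightarrow> X \<in> generated n (A @ B) l"
  unfolding generated_def by force

lemma generated_append_right:
  assumes "X \<in> generated n B (apply_circ A l)"
  shows "X \<in> generated n (A @ B) l"
proof -
  obtain m q where X: "X = apply_circ (take m B) (apply_circ A l) q" "1 \<le> m" "m \<le> length B" "q \<in> {1..n}"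
    using assms unfolding generated_def by blast
  have "X = apply_circ (take (length A + m) (A @ B)) l q"
    using X(1) by simp
  with X(2-4) show ?thesis
    unfolding generated_def by (intro CollectI exI[of _ "length A + m"] exI[of _ q]) auto
qed

definition label_sum :: "(nat \<Rightarrow> nat set) \<Rightarrow> nat set \<Rightarrow> nat set" where
  "label_sum l A = {x. odd (card {i \<in> A. x \<in> l i})}"

lemma odd_card_sym_diff:
  assumes "finite A" "finite B"
  shows "odd (card (labmul A B)) \<longleftrightarrow> odd (card A) \<noteq> odd (card B)"
proof -
  have "card (A \<union> B) + card (A \<inter> B) = card A + card B"
    using card_Un_Int[OF assms] by simp
  moreover have "card (labmul A B) = card (A \<union> B) - card (A \<inter> B)"
    unfolding labmul_def using assms by (subst card_Diff_subset[symmetric]) (auto intro: arg_cong[where f = card])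
  moreover have "card (A \<inter> B) \<le> card (A \<union> B)"
    using assms by (intro card_mono) auto
  ultimately show ?thesis by presburger
qed

lemma label_sum_labmul:
  assumes "finite A" "finite B"
  shows "labmul (label_sum l A) (label_sum l B) = label_sum l (labmul A B)"
proof -
  have "{i \<in> labmul A B. x \<in> l i} = labmul {i \<in> A. x \<in> l i} {i \<in> B. x \<in> l i}" for x
    unfolding labmul_def by auto
  then have "x \<in> label_sum l (labmul A B) \<longleftrightarrow> (x \<in> label_sum l A) \<noteq> (x \<in> label_sum l B)" for x
    using assms by (simp add: label_sum_def odd_card_sym_diff)
  then show ?thesis
    unfolding labmul_def by blast
qed

lemma label_sum_singleton [simp]: "label_sum l {q} = l q"
  unfolding label_sum_def by (auto simp: Collect_conv_if)

lemma label_sum_insert: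
  assumes "finite A" "a \<notin> A"
  shows "label_sum l (insert a A) = labmul (l a) (label_sum l A)"
proof -
  have "labmul {a} A = insert a A"
    using assms(2) unfolding labmul_def by auto
  then show ?thesis
    using label_sum_labmul[of "{a}" A l] assms(1) by simp
qed

lemma label_sum_reindex: "inj_on f A \<Longrightarrow> label_sum l (f ` A) = label_sum (l \<circ> f) A"
proof -
  assume inj: "inj_on f A"
  have "{j \<in> f ` A. x \<in> l j} = f ` {i \<in> A. x \<in> l (f i)}" for x
    by auto
  moreover have "card (f ` {i \<in> A. x \<in> l (f i)}) = card {i \<in> A. x \<in> l (f i)}" for x
    by (rule card_image) (rule inj_on_subset[OF inj], auto)
  ultimately show ?thesis
    unfolding label_sum_def by simp
qed

lemma label_sum_singletons:
  assumes "finite A" "inj_on \<tau> A" "\<forall>i\<in>A. l i = {\<tau> i}"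
  shows "label_sum l A = \<tau> ` A"
  using assms
proof (induction A rule: finite_induct)
  case empty
  show ?case by (simp add: label_sum_def)
next
  case (insert a A)
  then have "\<tau> a \<notin> \<tau> ` A" by auto
  with insert show ?case
    by (simp add: label_sum_insert labmul_disjoint)
qed

lemma apply_moment_label_sum:
  assumes "\<forall>q. finite (L q)"
  shows "apply_moment M (\<lambda>q. label_sum l (L q)) = (\<lambda>q. label_sum l (apply_moment M L q))"
  using assms unfolding apply_moment_def by (simp add: label_sum_labmul fun_eq_iff)

lemma finite_apply_moment: "\<forall>q. finite (L q) \<Longrightarrow> \<forall>q. finite (apply_moment M L q)"
  by (auto simp: apply_moment_def finite_labmul)

lemma apply_circ_label_sum:
  assumes "\<forall>q. finite (L q)"
  shows "apply_circ C (\<lambda>q. label_sum l (L q)) = (\<lambda>q. label_sum l (apply_circ C L q))"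
    and "finite (apply_circ C L q)"
  using assms
  by (induction C arbitrary: L) (simp_all add: apply_moment_label_sum finite_apply_moment)

lemma finite_apply_circ_l0 [simp]: "finite (apply_circ C l0 q)"
  by (rule apply_circ_label_sum(2)) (simp add: l0_def)

text \<open>CNOT circuits act linearly over GF(2) on labels: the output on arbitrary input labels is
  determined by the output on the standard labels.\<close>
lemma apply_circ_linear: "apply_circ C l q = label_sum l (apply_circ C l0 q)"
proof -
  have "apply_circ C l = apply_circ C (\<lambda>q. label_sum l (l0 q))"
    by (simp add: l0_def)
  also have "\<dots> = (\<lambda>q. label_sum l (apply_circ C l0 q))"
    by (rule apply_circ_label_sum) (simp add: l0_def)
  finally show ?thesis by simp
qed

section \<open>Well-formed circuits and relabelled qubits\<close>

lemma is_circuit_Nil [simp]: "is_circuit n []"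
  by (simp add: is_circuit_def)

lemma is_circuit_append [simp]: "is_circuit n (A @ B) \<longleftrightarrow> is_circuit n A \<and> is_circuit n B"
  unfolding is_circuit_def by (simp only: set_append ball_Un)

lemma is_circuit_Cons: "is_circuit n (M # C) \<Longrightarrow> is_circuit n C"
  unfolding is_circuit_def by simp

lemma is_circuit_concat: "\<forall>C\<in>set Cs. is_circuit n C \<Longrightarrow> is_circuit n (concat Cs)"
  by (induction Cs) simp_all

lemma is_circuit_CX: "i \<noteq> j \<Longrightarrow> i \<in> {1..n} \<Longrightarrow> j \<in> {1..n} \<Longrightarrow> is_circuit n (CX i j)"
  unfolding is_circuit_def CX_def by simp

lemma is_circuit_SW: "a \<noteq> b \<Longrightarrow> a \<in> {1..n} \<Longrightarrow> b \<in> {1..n} \<Longrightarrow> is_circuit n (SW a b)"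
  unfolding SW_def by (simp add: is_circuit_CX)

lemma is_circuit_DX: "a \<noteq> b \<Longrightarrow> a \<in> {1..n} \<Longrightarrow> b \<in> {1..n} \<Longrightarrow> is_circuit n (DX a b)"
  unfolding DX_def by (simp add: is_circuit_CX)

lemma is_circuit_gate_range:
  "is_circuit n C \<Longrightarrow> M \<in> set C \<Longrightarrow> (i, j) \<in> M \<Longrightarrow> i \<in> {1..n} \<and> j \<in> {1..n} \<and> i \<noteq> j"
  unfolding is_circuit_def by fastforce

lemma is_circuit_disjoint:
  "is_circuit n C \<Longrightarrow> M \<in> set C \<Longrightarrow> (a, b) \<in> M \<Longrightarrow> (c, d) \<in> M \<Longrightarrow> (a, b) \<noteq> (c, d) \<Longrightarrow>
    {a, b} \<inter> {c, d} = {}"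
  unfolding is_circuit_def by fastforce

lemma is_circuit_unique_control:
  "is_circuit n C \<Longrightarrow> M \<in> set C \<Longrightarrow> (i, q) \<in> M \<Longrightarrow> (i', q) \<in> M \<Longrightarrow> i' = i"
  using is_circuit_disjoint[of n C M i q i' q] by auto

lemma is_circuit_map_gates:
  assumes C: "is_circuit m C" and f: "inj_on f {1..m}" "f ` {1..m} \<subseteq> {1..N}"
  shows "is_circuit N (map_gates f C)"
  unfolding is_circuit_def map_gates_def
proof (rule ballI, rule conjI)
  fix M' assume "M' \<in> set (map (\<lambda>M. (\<lambda>(i, j). (f i, f j)) ` M) C)"
  then obtain M where M: "M \<in> set C" "M' = (\<lambda>(i, j). (f i, f j)) ` M" by auto
  show "\<forall>(i', j')\<in>M'. i' \<noteq> j' \<and> i' \<in> {1..N} \<and> j' \<in> {1..N}"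
  proof
    fix g assume "g \<in> M'"
    then obtain i j where ij: "(i, j) \<in> M" "g = (f i, f j)"
      using M(2) by auto
    then have "i \<in> {1..m}" "j \<in> {1..m}" "i \<noteq> j"
      using is_circuit_gate_range[OF C M(1)] by auto
    then have "f i \<noteq> f j" "f i \<in> {1..N}" "f j \<in> {1..N}"
      using f by (blast dest: inj_onD)+
    with ij(2) show "case g of (i', j') \<Rightarrow> i' \<noteq> j' \<and> i' \<in> {1..N} \<and> j' \<in> {1..N}"
      by simp
  qed
  show "\<forall>g\<in>M'. \<forall>g'\<in>M'. g \<noteq> g' \<longrightarrow> {fst g, snd g} \<inter> {fst g', snd g'} = {}"
  proof (intro ballI impI)
    fix g g' assume g: "g \<in> M'" "g' \<in> M'" "g \<noteq> g'"
    then obtain a b c d where abcd: "(a, b) \<in> M" "(c, d) \<in> M" "g = (f a, f b)" "g' = (f c, f d)"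
      using M(2) by auto
    then have "{a, b} \<inter> {c, d} = {}"
      using g(3) is_circuit_disjoint[OF C M(1) abcd(1,2)] by auto
    moreover have "{a, b} \<subseteq> {1..m}" "{c, d} \<subseteq> {1..m}"
      using is_circuit_gate_range[OF C M(1)] abcd(1,2) by auto
    ultimately show "{fst g, snd g} \<inter> {fst g', snd g'} = {}"
      using inj_on_image_Int[OF f(1), of "{a, b}" "{c, d}"] abcd(3,4) by simp
  qed
qed

lemma is_circuit_shift:
  "p \<ge> 1 \<Longrightarrow> is_circuit m C \<Longrightarrow> m + p - 1 \<le> N \<Longrightarrow> is_circuit N (shift p C)"
  unfolding shift_def by (rule is_circuit_map_gates) (auto simp: inj_on_def)

lemma apply_moment_target:
  assumes "(i, q) \<in> M" "\<And>i'. (i', q) \<in> M \<Longrightarrow> i' = i"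
  shows "apply_moment M l q = labmul (l i) (l q)"
proof -
  have "(THE i. (i, q) \<in> M) = i"
    using assms by (rule the_equality)
  with assms(1) show ?thesis
    unfolding apply_moment_def by auto
qed

lemma apply_moment_not_target: "(\<And>i. (i, q) \<notin> M) \<Longrightarrow> apply_moment M l q = l q"
  unfolding apply_moment_def by simp

lemma apply_circ_map_gates:
  assumes "inj f" "is_circuit m C"
  shows "apply_circ (map_gates f C) l (f q) = apply_circ C (l \<circ> f) q"
  using assms(2)
proof (induction C arbitrary: l)
  case Nil
  show ?case by (simp add: map_gates_def)
next
  case (Cons M C)
  let ?M' = "(\<lambda>(i, j). (f i, f j)) ` M"
  have unique: "i' = i" if "(i, q) \<in> M" "(i', q) \<in> M" for i i' q
    using is_circuit_unique_control[OF Cons.prems, of M] that by simp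
  have "apply_moment ?M' l (f q) = apply_moment M (l \<circ> f) q" for q
  proof (cases "\<exists>i. (i, q) \<in> M")
    case True
    then obtain i where i: "(i, q) \<in> M" by blast
    have "(f i, f q) \<in> ?M'"
      using i by force
    moreover have "i' = f i" if gate: "(i', f q) \<in> ?M'" for i'
    proof -
      obtain a b where "(a, b) \<in> M" "i' = f a" "f q = f b"
        using gate by auto
      with i show ?thesis
        using unique[of a q i] injD[OF assms(1)] by metis
    qed
    ultimately have "apply_moment ?M' l (f q) = labmul (l (f i)) (l (f q))"
      by (rule apply_moment_target)
    moreover have "apply_moment M (l \<circ> f) q = labmul (l (f i)) (l (f q))"
      using apply_moment_target[OF i unique[OF i]] by simp
    ultimately show ?thesis by simp
  next
    case False
    then have "(i, f q) \<notin> ?M'" for i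
      using injD[OF assms(1)] by auto
    then show ?thesis
      using False by (simp add: apply_moment_not_target)
  qed
  then have "(\<lambda>a. apply_moment ?M' l (f a)) = apply_moment M (\<lambda>a. l (f a))"
    by (simp add: comp_def)
  with Cons.IH[OF is_circuit_Cons[OF Cons.prems]] show ?case
    by (simp add: map_gates_def comp_def)
qed

lemma apply_circ_map_gates_outside:
  assumes "is_circuit m C" "q \<notin> f ` {1..m}"
  shows "apply_circ (map_gates f C) l q = l q"
  using assms(1)
proof (induction C arbitrary: l)
  case Nil
  show ?case by (simp add: map_gates_def)
next
  case (Cons M C)
  have "(i, q) \<notin> (\<lambda>(i, j). (f i, f j)) ` M" for i
    using is_circuit_gate_range[OF Cons.prems] assms(2) by fastforce
  with Cons show ?case
    using is_circuit_Cons[OF Cons.prems] by (simp add: map_gates_def apply_moment_not_target)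
qed

lemma inj_translate: "p \<ge> 1 \<Longrightarrow> inj (\<lambda>i::nat. i + p - 1)"
  by (auto simp: inj_def)

lemma apply_circ_shift:
  assumes "p \<ge> 1" "is_circuit m C"
  shows "apply_circ (shift p C) l (q + p - 1) = label_sum l ((\<lambda>i. i + p - 1) ` apply_circ C l0 q)"
proof -
  have "apply_circ (shift p C) l (q + p - 1) = apply_circ C (l \<circ> (\<lambda>i. i + p - 1)) q"
    unfolding shift_def using apply_circ_map_gates[OF inj_translate[OF assms(1)] assms(2)] by simp
  also have "\<dots> = label_sum (l \<circ> (\<lambda>i. i + p - 1)) (apply_circ C l0 q)"
    by (rule apply_circ_linear)
  also have "\<dots> = label_sum l ((\<lambda>i. i + p - 1) ` apply_circ C l0 q)"
    using inj_translate[OF assms(1)] by (simp add: label_sum_reindex inj_on_subset)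
  finally show ?thesis .
qed

lemma apply_circ_shift_outside:
  "p \<ge> 1 \<Longrightarrow> is_circuit m C \<Longrightarrow> q < p \<or> m + p - 1 < q \<Longrightarrow> apply_circ (shift p C) l q = l q"
  unfolding shift_def by (rule apply_circ_map_gates_outside) auto

lemma generated_shift:
  assumes p: "p \<ge> 1" and C: "is_circuit m C" and N: "m + p - 1 \<le> N"
    and X: "X \<in> generated m C l0"
  shows "label_sum l ((\<lambda>i. i + p - 1) ` X) \<in> generated N (shift p C) l"
proof -
  obtain t q where t: "X = apply_circ (take t C) l0 q" "1 \<le> t" "t \<le> length C" "q \<in> {1..m}"
    using X unfolding generated_def by blast
  have "is_circuit m (take t C)"
    using C unfolding is_circuit_def by (meson in_set_takeD)
  then have "label_sum l ((\<lambda>i. i + p - 1) ` X) = apply_circ (take t (shift p C)) l (q + p - 1)"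
    using apply_circ_shift[OF p] t(1) by (simp add: shift_def map_gates_def take_map)
  moreover have "q + p - 1 \<in> {1..N}" "t \<le> length (shift p C)"
    using t p N by (auto simp: shift_def map_gates_def)
  ultimately show ?thesis
    using t(2) unfolding generated_def by blast
qed

lemma bij_betw_finite_endo: "finite A \<Longrightarrow> inj_on f A \<Longrightarrow> f ` A \<subseteq> A \<Longrightarrow> bij_betw f A A"
  by (simp add: bij_betw_def endo_inj_surj)

lemma bij_betw_remove_fixpoint:
  "bij_betw f A A \<Longrightarrow> a \<in> A \<Longrightarrow> f a = a \<Longrightarrow> bij_betw f (A - {a}) (A - {a})"
  by (rule bij_betw_DiffI) (auto simp: bij_betw_def)

lemma bij_betw_translate:
  fixes \<pi> :: "nat \<Rightarrow> nat"
  assumes \<pi>: "bij_betw \<pi> {1..m} {1..m}" and p: "p \<ge> 1"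
  shows "bij_betw (\<lambda>q. \<pi> (q - p + 1) + p - 1) {p..m + p - 1} {p..m + p - 1}"
proof (rule bij_betw_finite_endo)
  have range: "\<pi> i \<in> {1..m}" if "i \<in> {1..m}" for i
    using \<pi> that by (auto simp: bij_betw_def)
  show "inj_on (\<lambda>q. \<pi> (q - p + 1) + p - 1) {p..m + p - 1}"
  proof (rule inj_onI)
    fix x y assume xy: "x \<in> {p..m + p - 1}" "y \<in> {p..m + p - 1}"
      and eq: "\<pi> (x - p + 1) + p - 1 = \<pi> (y - p + 1) + p - 1"
    have "x - p + 1 \<in> {1..m}" "y - p + 1 \<in> {1..m}"
      using xy p by auto
    moreover from this have "\<pi> (x - p + 1) \<ge> 1" "\<pi> (y - p + 1) \<ge> 1"
      using range by auto
    with eq have "\<pi> (x - p + 1) = \<pi> (y - p + 1)"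
      by linarith
    ultimately have "x - p + 1 = y - p + 1"
      using \<pi> by (auto simp: bij_betw_def dest: inj_onD)
    with xy show "x = y"
      by auto
  qed
  show "(\<lambda>q. \<pi> (q - p + 1) + p - 1) ` {p..m + p - 1} \<subseteq> {p..m + p - 1}"
  proof
    fix y assume "y \<in> (\<lambda>q. \<pi> (q - p + 1) + p - 1) ` {p..m + p - 1}"
    then obtain x where "x \<in> {p..m + p - 1}" "y = \<pi> (x - p + 1) + p - 1"
      by blast
    moreover from this have "\<pi> (x - p + 1) \<in> {1..m}"
      using p by (intro range) auto
    ultimately show "y \<in> {p..m + p - 1}"
      by auto
  qed
qed simp

section \<open>Part (1): the full generator\<close>

definition generates_special :: "nat \<Rightarrow> nat \<Rightarrow> circuit \<Rightarrow> bool" where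
  "generates_special k n C \<longleftrightarrow> is_circuit n C \<and>
     (\<forall>S. S \<subseteq> {2..n} \<and> card S = k - 1 \<longrightarrow> insert 1 S \<in> generated n C l0)"

lemma clean_special_iff:
  "clean_special k n C \<longleftrightarrow> generates_special k n C \<and> k \<le> n \<and>
     (\<exists>\<pi>. bij_betw \<pi> {1..n} {1..n} \<and> \<pi> 1 = 1 \<and> (\<forall>q\<in>{1..n}. apply_circ C l0 q = {\<pi> q}))"
  unfolding clean_special_def generates_special_def by blast

lemma generated_shift_insert:
  assumes C: "generates_special k m C" and p: "p \<ge> 1" "m + p - 1 \<le> N"
    and Q: "Q \<subseteq> {p + 1..m + p - 1}" "card Q = k - 1"
  shows "label_sum l (insert p Q) \<in> generated N (shift p C) l"
proof -
  let ?T = "(\<lambda>q. q + 1 - p) ` Q"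
  have "inj_on (\<lambda>q. q + 1 - p) Q"
    using Q(1) by (force simp: inj_on_def)
  then have "?T \<subseteq> {2..m}" "card ?T = k - 1"
    using Q p by (force, simp add: card_image)
  then have "insert 1 ?T \<in> generated m C l0"
    using C unfolding generates_special_def by blast
  then have "label_sum l ((\<lambda>i. i + p - 1) ` insert 1 ?T) \<in> generated N (shift p C) l"
    using C p unfolding generates_special_def by (intro generated_shift) auto
  moreover have "(\<lambda>i. i + p - 1) ` insert 1 ?T = insert p Q"
    using Q(1) p by (force simp: image_image)
  ultimately show ?thesis
    by simp
qed

lemma generated_shift_singletons:
  assumes C: "generates_special k m C" and p: "p \<ge> 1" "m + p - 1 = n" "n \<le> N"
    and l: "\<forall>q\<in>{p..n}. l q = {\<tau> q}" and \<tau>: "inj_on \<tau> {p..n}"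
    and S: "S \<subseteq> \<tau> ` {p..n}" "\<tau> p \<in> S" "card S = k"
  shows "S \<in> generated N (shift p C) l"
proof -
  define Q where "Q = {q \<in> {p + 1..n}. \<tau> q \<in> S}"
  have "p \<le> n"
    using S(1,2) by auto
  then have Q: "Q \<subseteq> {p + 1..n}" "insert p Q \<subseteq> {p..n}"
    unfolding Q_def by auto
  have image: "\<tau> ` insert p Q = S"
  proof
    show "S \<subseteq> \<tau> ` insert p Q"
    proof
      fix x assume "x \<in> S"
      then obtain q where "q \<in> {p..n}" "x = \<tau> q"
        using S(1) by blast
      with \<open>x \<in> S\<close> show "x \<in> \<tau> ` insert p Q"
        unfolding Q_def by (cases "q = p") auto
    qed
  qed (use S(2) in \<open>auto simp: Q_def\<close>)
  have "p \<notin> Q" "finite Q"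
    using Q(1) finite_subset by auto
  then have "card Q = k - 1"
    using S(3) image card_image[OF inj_on_subset[OF \<tau> Q(2)]] by simp
  then have "label_sum l (insert p Q) \<in> generated N (shift p C) l"
    using generated_shift_insert[OF C p(1)] p Q(1) by simp
  moreover have "label_sum l (insert p Q) = \<tau> ` insert p Q"
    using l Q(2) \<open>finite Q\<close> by (intro label_sum_singletons inj_on_subset[OF \<tau>]) auto
  ultimately show ?thesis
    using image by simp
qed

lemma apply_circ_shift_permutation:
  assumes C: "is_circuit m C" and p: "p \<ge> 1" and \<pi>: "\<forall>q\<in>{1..m}. apply_circ C l0 q = {\<pi> q}"
    and q: "q \<in> {p..m + p - 1}"
  shows "apply_circ (shift p C) l q = l (\<pi> (q - p + 1) + p - 1)"
proof -
  have "q - p + 1 \<in> {1..m}" "q - p + 1 + p - 1 = q"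
    using p q by auto
  then show ?thesis
    using apply_circ_shift[OF p C, of l "q - p + 1"] \<pi> by simp
qed

lemma apply_circ_shift_clean_special:
  assumes C: "clean_special k m C" and p: "p \<ge> 1" "p \<le> n" "m + p - 1 = n"
    and l: "\<forall>q\<in>{p..n}. l q = {\<tau> q}" and \<tau>: "inj_on \<tau> {p..n}"
  obtains \<sigma> where "inj_on \<sigma> {p + 1..n}" "\<sigma> ` {p + 1..n} = \<tau> ` {p + 1..n}"
    "\<forall>q\<in>{p + 1..n}. apply_circ (shift p C) l q = {\<sigma> q}"
proof -
  obtain \<pi> where \<pi>: "bij_betw \<pi> {1..m} {1..m}" "\<pi> 1 = 1" "\<forall>q\<in>{1..m}. apply_circ C l0 q = {\<pi> q}"
    using C unfolding clean_special_def by blast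
  have "m \<ge> 1"
    using p by simp
  let ?\<pi> = "\<lambda>q. \<pi> (q - p + 1) + p - 1"
  have "bij_betw ?\<pi> ({p..n} - {p}) ({p..n} - {p})"
    using bij_betw_translate[OF \<pi>(1) p(1)] \<pi>(2) p \<open>m \<ge> 1\<close> by (intro bij_betw_remove_fixpoint) auto
  moreover have "{p..n} - {p} = {p + 1..n}"
    by auto
  ultimately have bij: "bij_betw ?\<pi> {p + 1..n} {p + 1..n}"
    by simp
  show thesis
  proof
    have "inj_on \<tau> {p + 1..n}"
      using \<tau> by (rule inj_on_subset) auto
    with bij show "inj_on (\<tau> \<circ> ?\<pi>) {p + 1..n}"
      by (simp add: bij_betw_def comp_inj_on)
    show "(\<tau> \<circ> ?\<pi>) ` {p + 1..n} = \<tau> ` {p + 1..n}"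
      using bij unfolding bij_betw_def by (metis image_comp)
    show "\<forall>q\<in>{p + 1..n}. apply_circ (shift p C) l q = {(\<tau> \<circ> ?\<pi>) q}"
    proof
      fix q assume q: "q \<in> {p + 1..n}"
      then have "?\<pi> q \<in> {p + 1..n}"
        using bij unfolding bij_betw_def by blast
      then have "?\<pi> q \<in> {p..n}"
        by simp
      moreover have "is_circuit m C"
        using C unfolding clean_special_def by blast
      ultimately show "apply_circ (shift p C) l q = {(\<tau> \<circ> ?\<pi>) q}"
        using apply_circ_shift_permutation[OF _ p(1) \<pi>(3), where l = l and q = q] q p l by auto
    qed
  qed
qed

definition full_gen_from :: "(nat \<Rightarrow> circuit) \<Rightarrow> nat \<Rightarrow> nat \<Rightarrow> nat \<Rightarrow> circuit" where
  "full_gen_from G k n p = concat (map (\<lambda>p. shift p (G (n - p + 1))) [p..<n - k + 2])"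

lemma full_gen_from_Cons:
  assumes "p < n - k + 2"
  shows "full_gen_from G k n p = shift p (G (n - p + 1)) @ full_gen_from G k n (Suc p)"
  unfolding full_gen_from_def upt_conv_Cons[OF assms] by simp

lemma is_circuit_full_gen_from:
  assumes G: "\<forall>m\<ge>k. clean_special k m (G m)" and "1 \<le> k" "k \<le> n" "p \<ge> 1"
  shows "is_circuit n (full_gen_from G k n p)"
  unfolding full_gen_from_def
proof (rule is_circuit_concat, intro ballI)
  fix C assume "C \<in> set (map (\<lambda>p. shift p (G (n - p + 1))) [p..<n - k + 2])"
  then obtain q where q: "p \<le> q" "q < n - k + 2" and C: "C = shift q (G (n - q + 1))"
    by auto
  then have "is_circuit (n - q + 1) (G (n - q + 1))"
    using G assms(3) unfolding clean_special_def by auto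
  then show "is_circuit n C"
    unfolding C
    using q assms(2-4) by (intro is_circuit_shift) auto
qed

text \<open>Either the first label of the window lies in S, and the first block generates S, or the
  first block only permutes the remaining labels and the later blocks take over.\<close>
lemma generated_full_gen_from:
  assumes G: "\<forall>m\<ge>k. clean_special k m (G m)" and k: "1 \<le> k" and p: "1 \<le> p" "p \<le> n - k + 1"
    and l: "\<forall>q\<in>{p..n}. l q = {\<tau> q}" and \<tau>: "inj_on \<tau> {p..n}"
    and S: "S \<subseteq> \<tau> ` {p..n}" "card S = k"
  shows "S \<in> generated n (full_gen_from G k n p) l"
  using p l \<tau> S
proof (induction "n - k + 1 - p" arbitrary: p l \<tau> rule: less_induct)
  case less
  let ?B = "shift p (G (n - p + 1))"
  have "k \<le> n + 1 - p"
    using less.prems(6) card_mono[OF _ less.prems(5)] card_image_le[of "{p..n}" \<tau>] by simp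
  then have n: "p \<le> n" "n - p + 1 + p - 1 = n"
    using k by auto
  have C: "clean_special k (n - p + 1) (G (n - p + 1))"
    using G \<open>k \<le> n + 1 - p\<close> by simp
  then have gen: "generates_special k (n - p + 1) (G (n - p + 1))"
    unfolding clean_special_iff by blast
  have split: "full_gen_from G k n p = ?B @ full_gen_from G k n (Suc p)"
    using less.prems(2) k by (intro full_gen_from_Cons) auto
  show ?case
  proof (cases "\<tau> p \<in> S")
    case True
    then have "S \<in> generated n ?B l"
      using generated_shift_singletons[OF gen less.prems(1) n(2) order.refl] less.prems by blast
    then show ?thesis
      unfolding split by (rule generated_append_left)
  next
    case False
    have S: "S \<subseteq> \<tau> ` {p + 1..n}"
    proof
      fix x assume "x \<in> S"
      then obtain q where "q \<in> {p..n}" "x = \<tau> q"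
        using less.prems(5) by blast
      with False \<open>x \<in> S\<close> show "x \<in> \<tau> ` {p + 1..n}"
        by (cases "q = p") auto
    qed
    then have "k \<le> n - p"
      using less.prems(6) card_mono[OF _ S] card_image_le[of "{p + 1..n}" \<tau>] by simp
    with k have next_block: "Suc p \<le> n - k + 1"
      by arith
    obtain \<sigma> where \<sigma>: "inj_on \<sigma> {p + 1..n}" "\<sigma> ` {p + 1..n} = \<tau> ` {p + 1..n}"
      "\<forall>q\<in>{p + 1..n}. apply_circ ?B l q = {\<sigma> q}"
      using apply_circ_shift_clean_special[OF C less.prems(1) n(1,2) less.prems(3,4)] by blast
    have "S \<in> generated n (full_gen_from G k n (Suc p)) (apply_circ ?B l)"
      using less.hyps[of "Suc p" "apply_circ ?B l" \<sigma>] next_block \<sigma> S less.prems(6) by simp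
    then show ?thesis
      unfolding split by (rule generated_append_right)
  qed
qed

theorem k_body_gen_full_gen:
  assumes "1 \<le> k" "\<forall>m\<ge>k. clean_special k m (G m)" "k \<le> n"
  shows "k_body_gen k n (full_gen G k n)"
proof -
  have full: "full_gen G k n = full_gen_from G k n 1"
    unfolding full_gen_def full_gen_from_def ..
  have "S \<in> generated n (full_gen_from G k n 1) l0" if "S \<subseteq> {1..n}" "card S = k" for S
    using generated_full_gen_from[OF assms(2,1), of 1 n l0 id S] assms that by (auto simp: l0_def)
  then show ?thesis
    unfolding k_body_gen_def full using assms is_circuit_full_gen_from by auto
qed

section \<open>Part (2): the recursive construction\<close>

lemma bij_betw_extend_translate:
  fixes \<tau> :: "nat \<Rightarrow> nat"
  assumes "bij_betw \<tau> {1..m} {1..m}"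
  shows "bij_betw (\<lambda>q. if q = 1 then 1 else \<tau> (q - 1) + 1) {1..Suc m} {1..Suc m}"
proof -
  let ?ext = "\<lambda>q. if q = 1 then 1 else \<tau> (q - 1) + 1"
  have "bij_betw (\<lambda>q. \<tau> (q - 2 + 1) + 2 - 1) {2..Suc m} {2..Suc m}"
    using bij_betw_translate[OF assms, of 2] by simp
  moreover have "bij_betw ?ext {2..Suc m} {2..Suc m} \<longleftrightarrow>
      bij_betw (\<lambda>q. \<tau> (q - 2 + 1) + 2 - 1) {2..Suc m} {2..Suc m}"
  proof (rule bij_betw_cong)
    fix q :: nat assume "q \<in> {2..Suc m}"
    then have "q - 2 + 1 = q - 1" "q \<noteq> 1"
      by auto
    then show "?ext q = \<tau> (q - 2 + 1) + 2 - 1"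
      by simp
  qed
  ultimately have "bij_betw ?ext {2..Suc m} {2..Suc m}"
    by blast
  moreover have "bij_betw ?ext {1} {1}"
    by (simp add: bij_betw_singletonI)
  moreover have "{1} \<union> {2..Suc m} = {1..Suc m}"
    by auto
  ultimately show ?thesis
    using bij_betw_combine[of ?ext "{1}" "{1}" "{2..Suc m}" "{2..Suc m}"] by fastforce
qed

lemma bij_betw_swap12: "2 \<le> n \<Longrightarrow> bij_betw (\<lambda>q::nat. if q = 1 then 2 else if q = 2 then 1 else q) {1..n} {1..n}"
  by (rule bij_betw_finite_endo) (auto simp: inj_on_def)

definition W_head :: "(nat \<Rightarrow> circuit) \<Rightarrow> nat \<Rightarrow> circuit" where
  "W_head F n = CX 1 2 @ shift 2 (F (n - 1))"

lemma Wc_0: "Wc F k 0 = W_head F k"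
  by (simp add: W_head_def)

lemma Wc_Suc: "Wc F k (Suc d) = W_head F (k + Suc d) @ SW 1 2 @ shift 2 (Wc F k d)"
  by (simp add: W_head_def)

lemma is_circuit_W_head:
  assumes "clean_special (k - 1) (n - 1) (F (n - 1))" "2 \<le> n"
  shows "is_circuit n (W_head F n)"
proof -
  have "is_circuit (n - 1) (F (n - 1))"
    using assms(1) unfolding clean_special_def by blast
  then have "is_circuit n (shift 2 (F (n - 1)))"
    using assms(2) is_circuit_shift[of 2 "n - 1" "F (n - 1)" n] by simp
  moreover have "is_circuit n (CX 1 2)"
    using assms(2) by (intro is_circuit_CX) auto
  ultimately show ?thesis
    by (simp add: W_head_def)
qed

lemma apply_CX12_l0: "apply_circ (CX 1 2) l0 = l0(2 := {1, 2})"
  by (auto simp: fun_eq_iff l0_def labmul_def)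

lemma generated_W_head:
  assumes F: "clean_special (k - 1) (n - 1) (F (n - 1))"
    and T: "T \<subseteq> {2..n}" "2 \<in> T" "card T = k - 1"
  shows "insert 1 T \<in> generated n (W_head F n) l0"
proof -
  let ?l = "l0(2 := {1, 2})"
  let ?Q = "T - {2}"
  have "2 \<le> n"
    using T by auto
  have Q: "?Q \<subseteq> {2 + 1..n - 1 + 2 - 1}" "card ?Q = k - 1 - 1" "finite ?Q"
    using T finite_subset[OF T(1)] by auto
  have "generates_special (k - 1) (n - 1) (F (n - 1))"
    using F unfolding clean_special_iff by blast
  then have "label_sum ?l (insert 2 ?Q) \<in> generated n (shift 2 (F (n - 1))) ?l"
    using Q(1,2) \<open>2 \<le> n\<close> by (intro generated_shift_insert) auto
  moreover have "label_sum ?l ?Q = ?Q"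
    using label_sum_singletons[OF Q(3), of id ?l] Q(1) by (auto simp: l0_def)
  then have "label_sum ?l (insert 2 ?Q) = labmul {1, 2} ?Q"
    using label_sum_insert[of ?Q 2 ?l] Q(3) by simp
  also have "\<dots> = insert 1 T"
    using T(2) Q(1) unfolding labmul_def by auto
  ultimately have "insert 1 T \<in> generated n (shift 2 (F (n - 1))) ?l"
    by (simp only:)
  then have "insert 1 T \<in> generated n (shift 2 (F (n - 1))) (apply_circ (CX 1 2) l0)"
    unfolding apply_CX12_l0 .
  then show ?thesis
    unfolding W_head_def by (rule generated_append_right)
qed

lemma apply_W_head:
  assumes F: "clean_special (k - 1) (n - 1) (F (n - 1))" and n: "2 \<le> n"
  obtains \<rho> where "bij_betw \<rho> {1..n} {1..n}" "\<rho> 1 = 1" "\<rho> 2 = 2"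
    "\<forall>q\<in>{1..n}. apply_circ (W_head F n) l0 q = (if q = 2 then {1, 2} else {\<rho> q})"
proof -
  obtain \<pi> where \<pi>: "bij_betw \<pi> {1..n - 1} {1..n - 1}" "\<pi> 1 = 1"
    "\<forall>q\<in>{1..n - 1}. apply_circ (F (n - 1)) l0 q = {\<pi> q}"
    using F unfolding clean_special_def by blast
  have C: "is_circuit (n - 1) (F (n - 1))"
    using F unfolding clean_special_def by blast
  define \<rho> where "\<rho> q = (if q = 1 then 1 else \<pi> (q - 1) + 1)" for q
  have bij: "bij_betw \<rho> {1..n} {1..n}"
    using bij_betw_extend_translate[OF \<pi>(1)] n unfolding \<rho>_def by simp
  have \<rho>2: "\<rho> 2 = 2"
    using \<pi>(2) by (simp add: \<rho>_def)
  have head: "apply_circ (W_head F n) l0 = apply_circ (shift 2 (F (n - 1))) (l0(2 := {1, 2}))"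
    unfolding W_head_def apply_circ_append apply_CX12_l0 ..
  show thesis
  proof
    show "bij_betw \<rho> {1..n} {1..n}" "\<rho> 1 = 1" "\<rho> 2 = 2"
      using bij \<rho>2 by (simp_all add: \<rho>_def)
    show "\<forall>q\<in>{1..n}. apply_circ (W_head F n) l0 q = (if q = 2 then {1, 2} else {\<rho> q})"
    proof
      fix q assume q: "q \<in> {1..n}"
      show "apply_circ (W_head F n) l0 q = (if q = 2 then {1, 2} else {\<rho> q})"
      proof (cases "q = 1")
        case True
        then show ?thesis
          using apply_circ_shift_outside[OF _ C, of 2 1] by (simp add: head \<rho>_def l0_def)
      next
        case False
        with q have "q \<in> {2..n - 1 + 2 - 1}" "q - 2 + 1 = q - 1"
          by auto
        then have "apply_circ (shift 2 (F (n - 1))) (l0(2 := {1, 2})) q = (l0(2 := {1, 2})) (\<rho> q)"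
          using apply_circ_shift_permutation[OF C _ \<pi>(3)] False by (simp add: \<rho>_def)
        moreover have "\<rho> q = 2 \<longleftrightarrow> q = 2"
        proof
          assume "\<rho> q = 2"
          moreover have "2 \<in> {1..n}"
            using n by simp
          ultimately show "q = 2"
            using bij q \<rho>2 unfolding bij_betw_def by (metis inj_onD)
        qed (use \<rho>2 in simp)
        ultimately show ?thesis
          unfolding head by (simp add: l0_def)
      qed
    qed
  qed
qed

lemma apply_W_head_SW:
  assumes F: "clean_special (k - 1) (n - 1) (F (n - 1))" and n: "2 \<le> n"
  obtains \<sigma> where "bij_betw \<sigma> {1..n} {1..n}" "\<sigma> 1 = 2" "\<sigma> 2 = 1"
    "\<forall>q\<in>{1..n}. apply_circ (W_head F n @ SW 1 2) l0 q = (if q = 1 then {1, 2} else {\<sigma> q})"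
proof -
  obtain \<rho> where \<rho>: "bij_betw \<rho> {1..n} {1..n}" "\<rho> 1 = 1" "\<rho> 2 = 2"
    "\<forall>q\<in>{1..n}. apply_circ (W_head F n) l0 q = (if q = 2 then {1, 2} else {\<rho> q})"
    using apply_W_head[of k n F, OF F n] by blast
  let ?swap = "\<lambda>q::nat. if q = 1 then 2 else if q = 2 then 1 else q"
  show thesis
  proof
    show "bij_betw (\<rho> \<circ> ?swap) {1..n} {1..n}"
      using bij_betw_swap12[OF n] \<rho>(1) by (rule bij_betw_trans)
    show "(\<rho> \<circ> ?swap) 1 = 2" "(\<rho> \<circ> ?swap) 2 = 1"
      using \<rho>(2,3) by simp_all
    show "\<forall>q\<in>{1..n}. apply_circ (W_head F n @ SW 1 2) l0 q = (if q = 1 then {1, 2} else {(\<rho> \<circ> ?swap) q})"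
      using \<rho>(2,4) n by (auto simp: apply_SW)
  qed
qed

lemma generates_special_Wc:
  assumes k: "2 \<le> k" and F: "\<forall>m\<ge>k - 1. clean_special (k - 1) m (F m)"
  shows "generates_special k (k + d) (Wc F k d)"
proof (induction d)
  case 0
  have F': "clean_special (k - 1) (k - 1) (F (k - 1))"
    using F by simp
  have "insert 1 T \<in> generated k (W_head F k) l0" if "T \<subseteq> {2..k}" "card T = k - 1" for T
  proof -
    have "T = {2..k}"
      using that by (intro card_subset_eq) auto
    then show ?thesis
      using generated_W_head[of k k F, OF F'] that k by auto
  qed
  then show ?case
    using is_circuit_W_head[of k k F, OF F' k] unfolding generates_special_def Wc_0 by simp
next
  case (Suc d)
  define n where "n = k + Suc d"
  have n: "3 \<le> n" "k + d = n - 1"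
    using k by (auto simp: n_def)
  have F': "clean_special (k - 1) (n - 1) (F (n - 1))"
    using F n by simp
  have IH: "generates_special k (n - 1) (Wc F k d)"
    using Suc n(2) by simp
  obtain \<sigma> where \<sigma>: "bij_betw \<sigma> {1..n} {1..n}" "\<sigma> 1 = 2" "\<sigma> 2 = 1"
    "\<forall>q\<in>{1..n}. apply_circ (W_head F n @ SW 1 2) l0 q = (if q = 1 then {1, 2} else {\<sigma> q})"
    using apply_W_head_SW[of k n F, OF F'] n by auto
  have "insert 1 T \<in> generated n (W_head F n @ SW 1 2 @ shift 2 (Wc F k d)) l0"
    if T: "T \<subseteq> {2..n}" "card T = k - 1" for T
  proof (cases "2 \<in> T")
    case True
    show ?thesis
      using generated_W_head[of k n F, OF F' T(1) True T(2)] by (rule generated_append_left)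
  next
    case False
    have "bij_betw \<sigma> ({1..n} - {1}) ({1..n} - {2})"
      using \<sigma>(2) n by (intro bij_betw_DiffI[OF \<sigma>(1)] bij_betw_singletonI) auto
    moreover have "{1..n} - {1} = {2..n}"
      by auto
    ultimately have inj: "inj_on \<sigma> {2..n}" and image: "\<sigma> ` {2..n} = {1..n} - {2}"
      by (simp_all add: bij_betw_def)
    have labels: "\<forall>q\<in>{2..n}. apply_circ (W_head F n @ SW 1 2) l0 q = {\<sigma> q}"
      using \<sigma>(4) by auto
    have "1 \<notin> T" "finite T"
      using T(1) finite_subset by auto
    then have "insert 1 T \<subseteq> \<sigma> ` {2..n}" "card (insert 1 T) = k"
      using T False n k unfolding image by auto
    then have "insert 1 T \<in> generated n (shift 2 (Wc F k d)) (apply_circ (W_head F n @ SW 1 2) l0)"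
      using generated_shift_singletons[OF IH _ _ order.refl labels inj] \<sigma>(3) n by simp
    then show ?thesis
      by (simp add: generated_append_right)
  qed
  moreover have "is_circuit n (W_head F n @ SW 1 2 @ shift 2 (Wc F k d))"
    using is_circuit_W_head[of k n F, OF F'] IH n is_circuit_SW[of 1 2 n] is_circuit_shift[of 2 "n - 1" _ n]
    unfolding generates_special_def by simp
  ultimately show ?case
    unfolding generates_special_def Wc_Suc n_def[symmetric] by blast
qed

text \<open>After W_k^(n), with a = n - k + 1, qubit q carries the image under a permutation tau with
  tau a = 1 of the label W_pattern a q: the extra element 1 sits on the qubits q < a and q = a + 1.\<close>
definition W_pattern :: "nat \<Rightarrow> nat \<Rightarrow> nat set" where
  "W_pattern a q = (if q \<le> a + 1 \<and> q \<noteq> a then {a, q} else {q})"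

lemma W_pattern_subset: "q \<in> {1..n} \<Longrightarrow> a \<in> {1..n} \<Longrightarrow> W_pattern a q \<subseteq> {1..n}"
  by (auto simp: W_pattern_def)

lemma W_pattern_Suc: "2 \<le> q \<Longrightarrow> (\<lambda>i. i + 1) ` W_pattern a (q - 1) = W_pattern (Suc a) q"
  by (auto simp: W_pattern_def)

lemma apply_Wc:
  assumes k: "2 \<le> k" and F: "\<forall>m\<ge>k - 1. clean_special (k - 1) m (F m)"
  shows "\<exists>\<tau>. bij_betw \<tau> {1..k + d} {1..k + d} \<and> \<tau> (d + 1) = 1 \<and>
    (\<forall>q\<in>{1..k + d}. apply_circ (Wc F k d) l0 q = \<tau> ` W_pattern (d + 1) q)"
proof (induction d)
  case 0
  have F': "clean_special (k - 1) (k - 1) (F (k - 1))"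
    using F by simp
  obtain \<rho> where \<rho>: "bij_betw \<rho> {1..k} {1..k}" "\<rho> 1 = 1" "\<rho> 2 = 2"
    "\<forall>q\<in>{1..k}. apply_circ (W_head F k) l0 q = (if q = 2 then {1, 2} else {\<rho> q})"
    using apply_W_head[of k k F, OF F' k] by blast
  have "apply_circ (W_head F k) l0 q = \<rho> ` W_pattern 1 q" if "q \<in> {1..k}" for q
    using \<rho>(2-4) that by (auto simp: W_pattern_def)
  with \<rho>(1,2) show ?case
    unfolding Wc_0 by auto
next
  case (Suc d)
  define n where "n = k + Suc d"
  have n: "3 \<le> n" "k + d = n - 1"
    using k by (auto simp: n_def)
  have F': "clean_special (k - 1) (n - 1) (F (n - 1))"
    using F n by simp
  have W': "is_circuit (n - 1) (Wc F k d)"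
    using generates_special_Wc[OF k F, of d] n(2) unfolding generates_special_def by simp
  obtain \<tau>' where \<tau>': "bij_betw \<tau>' {1..n - 1} {1..n - 1}" "\<tau>' (d + 1) = 1"
    "\<forall>q\<in>{1..n - 1}. apply_circ (Wc F k d) l0 q = \<tau>' ` W_pattern (d + 1) q"
    using Suc n(2) by auto
  obtain \<sigma> where \<sigma>: "bij_betw \<sigma> {1..n} {1..n}" "\<sigma> 1 = 2" "\<sigma> 2 = 1"
    "\<forall>q\<in>{1..n}. apply_circ (W_head F n @ SW 1 2) l0 q = (if q = 1 then {1, 2} else {\<sigma> q})"
    using apply_W_head_SW[of k n F, OF F'] n by auto
  define lS where "lS = apply_circ (W_head F n @ SW 1 2) l0"
  have step: "apply_circ (Wc F k (Suc d)) l0 = apply_circ (shift 2 (Wc F k d)) lS"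
    unfolding Wc_Suc n_def[symmetric] lS_def append_assoc[symmetric] by (rule apply_circ_append)
  define ext where "ext q = (if q = 1 then 1 else \<tau>' (q - 1) + 1)" for q
  have ext: "bij_betw ext {1..n} {1..n}"
    using bij_betw_extend_translate[OF \<tau>'(1)] n unfolding ext_def by simp
  have \<sigma>_inj: "inj_on \<sigma> {2..n}"
    using \<sigma>(1) inj_on_subset[of \<sigma> "{1..n}" "{2..n}"] by (auto simp: bij_betw_def)
  have \<sigma>_labels: "\<forall>i\<in>{2..n}. lS i = {\<sigma> i}"
    using \<sigma>(4) unfolding lS_def by auto
  have ext_a: "ext (d + 2) = 2"
    using \<tau>'(2) by (simp add: ext_def)
  have out: "apply_circ (Wc F k (Suc d)) l0 q = (\<sigma> \<circ> ext) ` W_pattern (d + 2) q" if q: "q \<in> {1..n}" for q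
  proof (cases "q = 1")
    case True
    have "apply_circ (shift 2 (Wc F k d)) lS 1 = lS 1"
      using apply_circ_shift_outside[OF _ W'] by simp
    also have "lS 1 = {1, 2}"
      using \<sigma>(4) n unfolding lS_def by simp
    moreover have "ext 1 = 1"
      by (simp add: ext_def)
    with ext_a have "(\<sigma> \<circ> ext) ` W_pattern (d + 2) 1 = {1, 2}"
      using \<sigma>(2,3) by (auto simp: W_pattern_def)
    ultimately show ?thesis
      using True unfolding step by simp
  next
    case False
    let ?P = "W_pattern (d + 1) (q - 1)"
    have "q - 1 \<in> {1..n - 1}"
      using q False by auto
    have P: "?P \<subseteq> {1..n - 1}"
      using q False n k by (intro W_pattern_subset) auto
    have "apply_circ (shift 2 (Wc F k d)) lS (q - 1 + 2 - 1) =
        label_sum lS ((\<lambda>i. i + 1) ` (\<tau>' ` ?P))"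
      using apply_circ_shift[OF _ W', of 2 lS "q - 1"] \<tau>'(3) \<open>q - 1 \<in> {1..n - 1}\<close> by simp
    also have "\<dots> = \<sigma> ` ((\<lambda>i. i + 1) ` (\<tau>' ` ?P))"
    proof (rule label_sum_singletons)
      have "\<tau>' ` ?P \<subseteq> {1..n - 1}"
        using P \<tau>'(1) unfolding bij_betw_def by blast
      then have sub: "(\<lambda>i. i + 1) ` (\<tau>' ` ?P) \<subseteq> {2..n}"
        using n by (auto simp: subset_iff)
      show "finite ((\<lambda>i. i + 1) ` (\<tau>' ` ?P))"
        using sub finite_subset by blast
      show "inj_on \<sigma> ((\<lambda>i. i + 1) ` (\<tau>' ` ?P))"
        using inj_on_subset[OF \<sigma>_inj sub] .
      show "\<forall>i\<in>(\<lambda>i. i + 1) ` (\<tau>' ` ?P). lS i = {\<sigma> i}"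
        using sub \<sigma>_labels by blast
    qed
    also have "(\<lambda>i. i + 1) ` (\<tau>' ` ?P) = ext ` ((\<lambda>i. i + 1) ` ?P)"
      using P by (force simp: ext_def image_image)
    also have "(\<lambda>i. i + 1) ` ?P = W_pattern (d + 2) q"
      using W_pattern_Suc[of q "d + 1"] False q by simp
    finally show ?thesis
      using False q unfolding step by (simp add: image_comp)
  qed
  show ?case
  proof (intro exI conjI)
    show "bij_betw (\<sigma> \<circ> ext) {1..k + Suc d} {1..k + Suc d}"
      using bij_betw_trans[OF ext \<sigma>(1)] by (simp add: n_def)
    show "(\<sigma> \<circ> ext) (Suc d + 1) = 1"
      using ext_a \<sigma>(3) by simp
    show "\<forall>q\<in>{1..k + Suc d}. apply_circ (Wc F k (Suc d)) l0 q = (\<sigma> \<circ> ext) ` W_pattern (Suc d + 1) q"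
      using out by (simp add: n_def)
  qed
qed

lemma refl_PTC: "refl 1 m (PTC m) = concat (map (\<lambda>i. DX (m + 1 - i) (m - i)) [1..<m])"
proof -
  have map_DX: "map_gates f (DX a b) = DX (f a) (f b)" for f a b
    by (simp add: DX_def CX_def map_gates_def)
  have "refl 1 m (PTC m) = map_gates (\<lambda>i. 1 + m - i) (PTC m)"
    by (simp add: refl_def shift_def map_gates_def)
  also have "\<dots> = concat (map (\<lambda>i. DX (1 + m - i) (1 + m - (i + 1))) [1..<m])"
    unfolding PTC_def map_gates_def map_concat by (simp add: comp_def map_DX[unfolded map_gates_def])
  also have "\<dots> = concat (map (\<lambda>i. DX (m + 1 - i) (m - i)) [1..<m])"
    by (intro arg_cong[where f = concat] map_cong) auto
  finally show ?thesis .
qed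

lemma refl_PTC_Suc: "1 \<le> m \<Longrightarrow> refl 1 (Suc m) (PTC (Suc m)) = DX (m + 1) m @ refl 1 m (PTC m)"
proof -
  assume m: "1 \<le> m"
  have "[1..<Suc m] = 1 # map Suc [1..<m]"
    using m by (simp add: upt_conv_Cons map_Suc_upt)
  then show ?thesis
    unfolding refl_PTC by (simp add: comp_def)
qed

lemma apply_refl_PTC:
  assumes "1 \<le> m" "l m = e" "\<forall>j\<in>{1..<m}. l j = labmul e (b j)"
  shows "apply_circ (refl 1 m (PTC m)) l 1 = e \<and>
    (\<forall>j\<in>{1..<m}. apply_circ (refl 1 m (PTC m)) l (j + 1) = b j) \<and>
    (\<forall>q>m. apply_circ (refl 1 m (PTC m)) l q = l q)"
  using assms
proof (induction m arbitrary: l)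
  case 0
  then show ?case by simp
next
  case (Suc m)
  show ?case
  proof (cases "m = 0")
    case True
    show ?thesis
      using Suc.prems unfolding True refl_PTC by simp
  next
    case False
    define l' where "l' = l(m + 1 := b m, m := e)"
    have m: "1 \<le> m"
      using False by simp
    have "apply_circ (DX (m + 1) m) l = l'"
      using Suc.prems m by (simp add: apply_DX l'_def)
    then have step: "apply_circ (refl 1 (Suc m) (PTC (Suc m))) l = apply_circ (refl 1 m (PTC m)) l'"
      unfolding refl_PTC_Suc[OF m] apply_circ_append by simp
    have l': "l' m = e" "\<forall>j\<in>{1..<m}. l' j = labmul e (b j)" "l' (m + 1) = b m" "\<forall>q>m + 1. l' q = l q"
      using Suc.prems by (auto simp: l'_def)
    have IH: "apply_circ (refl 1 m (PTC m)) l' 1 = e \<and>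
      (\<forall>j\<in>{1..<m}. apply_circ (refl 1 m (PTC m)) l' (j + 1) = b j) \<and>
      (\<forall>q>m. apply_circ (refl 1 m (PTC m)) l' q = l' q)"
      using Suc.IH[OF m l'(1,2)] .
    show ?thesis
      unfolding step using IH l'(3,4) by (auto simp: less_Suc_eq)
  qed
qed

lemma is_circuit_refl_PTC: "m \<le> n \<Longrightarrow> is_circuit n (refl 1 m (PTC m))"
  unfolding refl_PTC by (rule is_circuit_concat) (auto intro!: is_circuit_DX)

lemma generates_special_append:
  "generates_special k n A \<Longrightarrow> is_circuit n B \<Longrightarrow> generates_special k n (A @ B)"
  unfolding generates_special_def by (auto intro: generated_append_left)

lemma clean_special_step:
  assumes k: "2 \<le> k" and F: "\<forall>m\<ge>k - 1. clean_special (k - 1) m (F m)" and n: "k \<le> n"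
  shows "clean_special k n (W F k n @ CX (n - k + 1) (n - k + 2) @ refl 1 (n - k + 1) (PTC (n - k + 1)))"
proof -
  define a where "a = n - k + 1"
  have a: "1 \<le> a" "a + 1 \<le> n" "n - k + 2 = a + 1" "k + (a - 1) = n" "a - 1 + 1 = a"
    using k n by (auto simp: a_def)
  have W: "W F k n = Wc F k (a - 1)"
    by (simp add: W_def a_def)
  have gen: "generates_special k n (W F k n)"
    using generates_special_Wc[OF k F, of "a - 1"] unfolding W a(4) .
  obtain \<tau> where \<tau>: "bij_betw \<tau> {1..n} {1..n}" "\<tau> a = 1"
    "\<forall>q\<in>{1..n}. apply_circ (W F k n) l0 q = \<tau> ` W_pattern a q"
    using apply_Wc[OF k F, of "a - 1"] unfolding W a(4,5) by blast
  have \<tau>_ne: "\<tau> q \<noteq> 1" if "q \<in> {1..n}" "q \<noteq> a" for q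
    using that \<tau>(1,2) a inj_onD[of \<tau> "{1..n}" q a] by (auto simp: bij_betw_def)
  let ?lW = "apply_circ (W F k n) l0"
  have lW: "?lW a = {1}" "?lW (a + 1) = {1, \<tau> (a + 1)}"
    "\<forall>j\<in>{1..<a}. ?lW j = labmul {1} {\<tau> j}" "\<forall>q\<in>{a + 2..n}. ?lW q = {\<tau> q}"
    using \<tau> \<tau>_ne a by (auto simp: W_pattern_def labmul_def)
  define lC where "lC = ?lW(a + 1 := {\<tau> (a + 1)})"
  have cx: "apply_circ (CX a (a + 1)) ?lW = lC"
    using lW(1,2) \<tau>_ne[of "a + 1"] a by (auto simp: lC_def labmul_def)
  have R: "apply_circ (refl 1 a (PTC a)) lC 1 = {1} \<and>
      (\<forall>j\<in>{1..<a}. apply_circ (refl 1 a (PTC a)) lC (j + 1) = {\<tau> j}) \<and>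
      (\<forall>q>a. apply_circ (refl 1 a (PTC a)) lC q = lC q)"
    using lW(1,3) a(1) by (intro apply_refl_PTC) (auto simp: lC_def)
  have out: "apply_circ (W F k n @ CX a (a + 1) @ refl 1 a (PTC a)) l0 q =
      {\<tau> (if q = 1 then a else if q \<le> a then q - 1 else q)}" if q: "q \<in> {1..n}" for q
  proof -
    have "apply_circ (W F k n @ CX a (a + 1) @ refl 1 a (PTC a)) l0 q = apply_circ (refl 1 a (PTC a)) lC q"
      unfolding apply_circ_append cx ..
    moreover consider "q = 1" | "2 \<le> q" "q \<le> a" | "q = a + 1" | "a + 2 \<le> q"
      using q by force
    then have "apply_circ (refl 1 a (PTC a)) lC q = {\<tau> (if q = 1 then a else if q \<le> a then q - 1 else q)}"
    proof cases
      case 2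
      then have "q - 1 \<in> {1..<a}" "q - 1 + 1 = q"
        by auto
      with 2 show ?thesis
        using R by fastforce
    qed (use R \<tau>(2) lW(4) q in \<open>auto simp: lC_def\<close>)
    ultimately show ?thesis
      by simp
  qed
  have c: "bij_betw (\<lambda>q. if q = 1 then a else if q \<le> a then q - 1 else q) {1..n} {1..n}"
    using a by (intro bij_betw_finite_endo) (auto simp: inj_on_def)
  show ?thesis
    unfolding clean_special_iff a(3) a_def[symmetric]
  proof (intro conjI exI)
    have "is_circuit n (CX a (a + 1))" "is_circuit n (refl 1 a (PTC a))"
      using a(1,2) by (intro is_circuit_CX is_circuit_refl_PTC; simp)+
    then have "is_circuit n (CX a (a + 1) @ refl 1 a (PTC a))"
      by (simp only: is_circuit_append)
    with gen show "generates_special k n (W F k n @ CX a (a + 1) @ refl 1 a (PTC a))"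
      by (rule generates_special_append)
    show "bij_betw (\<tau> \<circ> (\<lambda>q. if q = 1 then a else if q \<le> a then q - 1 else q)) {1..n} {1..n}"
      using c \<tau>(1) by (rule bij_betw_trans)
  qed (use n \<tau>(2) out in auto)
qed

theorem clean_special_special_gen:
  assumes k0: "1 \<le> k0" and G0: "\<forall>n\<ge>k0. clean_special k0 n (G0 n)"
  shows "\<forall>n\<ge>k0 + d. clean_special (k0 + d) n (special_gen G0 k0 d n)"
proof (induction d)
  case 0
  show ?case using G0 by simp
next
  case (Suc d)
  have "2 \<le> k0 + Suc d" "k0 + Suc d - 1 = k0 + d"
    using k0 by auto
  then show ?case
    using clean_special_step[of "k0 + Suc d" "special_gen G0 k0 d"] Suc by (simp add: Let_def)
qed

section \<open>Asymptotics of partial sums\<close>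

lemma bigo_refl: "f \<in> O[F](f)"
  by (rule bigoI[of _ 1]) simp

lemma bigo_trans:
  fixes f g h :: "'a \<Rightarrow> real"
  assumes "f \<in> O[F](g)" "g \<in> O[F](h)"
  shows "f \<in> O[F](h)"
proof -
  obtain c d where cd: "c > 0" "d > 0" "eventually (\<lambda>x. norm (f x) \<le> c * norm (g x)) F"
    "eventually (\<lambda>x. norm (g x) \<le> d * norm (h x)) F"
    using assms unfolding bigo_def by blast
  from cd(3,4) have "eventually (\<lambda>x. norm (f x) \<le> (c * d) * norm (h x)) F"
  proof eventually_elim
    case (elim x)
    with cd(1) show ?case
      by (metis mult.assoc mult_left_mono order_trans less_imp_le)
  qed
  then show ?thesis
    by (rule bigoI)
qed

lemma bigo_eventually_eq:
  fixes f g h :: "'a \<Rightarrow> real"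
  assumes "eventually (\<lambda>x. f x = g x) F" "f \<in> O[F](h)"
  shows "g \<in> O[F](h)"
proof -
  have "g \<in> O[F](f)"
    using assms(1) by (intro bigoI[of _ 1]) (auto elim: eventually_mono)
  then show ?thesis
    using assms(2) by (rule bigo_trans)
qed

lemma bigo_const_nat_power: "(\<lambda>_::nat. c) \<in> O(\<lambda>n. real n ^ a)"
proof (rule bigoI)
  show "eventually (\<lambda>n. norm c \<le> norm c * norm (real n ^ a)) at_top"
  proof (rule eventually_at_top_linorderI)
    fix n :: nat assume "1 \<le> n"
    then have "1 \<le> real n ^ a"
      by simp
    then show "norm c \<le> norm c * norm (real n ^ a)"
      using mult_left_mono[of 1 "real n ^ a" "norm c"] by simp
  qed
qed

lemma bigo_nat_power_mono: "a \<le> b \<Longrightarrow> (\<lambda>n::nat. real n ^ a) \<in> O(\<lambda>n. real n ^ b)"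
  by (intro bigoI[of _ 1]) (auto simp: eventually_at_top_linorder intro!: exI[of _ 1] power_increasing)

lemma bigo_nat_powr: "f \<in> O(\<lambda>n::nat. real n powr real a) \<longleftrightarrow> f \<in> O(\<lambda>n. real n ^ a)"
proof -
  have ev: "eventually (\<lambda>n::nat. real n powr real a = real n ^ a) at_top"
    by (auto simp: eventually_at_top_linorder powr_realpow intro!: exI[of _ 1])
  have "(\<lambda>n::nat. real n powr real a) \<in> O(\<lambda>n. real n ^ a)"
    by (rule bigo_eventually_eq[OF _ bigo_refl]) (use ev in \<open>simp add: eq_commute\<close>)
  moreover have "(\<lambda>n::nat. real n ^ a) \<in> O(\<lambda>n. real n powr real a)"
    by (rule bigo_eventually_eq[OF ev bigo_refl])
  ultimately show ?thesis
    by (blast intro: bigo_trans)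
qed

lemma bigo_const_mult: "f \<in> O(g) \<Longrightarrow> (\<lambda>x. c * f x) \<in> O(g)"
  by (simp only: cmult_in_bigo_iff) blast

lemma bigo_partial_sum:
  fixes e :: "nat \<Rightarrow> real"
  assumes "e \<in> O(\<lambda>n. real n ^ a)"
  shows "(\<lambda>n. \<Sum>m\<in>{K..<n}. e m) \<in> O(\<lambda>n. real n ^ Suc a)"
proof -
  obtain c where c: "c > 0" "eventually (\<lambda>n. norm (e n) \<le> c * norm (real n ^ a)) at_top"
    using assms unfolding bigo_def by blast
  then obtain N where N: "\<And>n. n \<ge> N \<Longrightarrow> \<bar>e n\<bar> \<le> c * real n ^ a"
    by (auto simp: eventually_at_top_linorder)
  define E where "E = (\<Sum>m<N. \<bar>e m\<bar>)"
  have "\<bar>\<Sum>m\<in>{K..<n}. e m\<bar> \<le> (E + c) * real n ^ Suc a" if n: "n \<ge> 1" for n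
  proof -
    have "\<bar>\<Sum>m\<in>{K..<n}. e m\<bar> \<le> (\<Sum>m\<in>{K..<n}. \<bar>e m\<bar>)"
      by (rule sum_abs)
    also have "\<dots> \<le> (\<Sum>m<n. \<bar>e m\<bar>)"
      by (intro sum_mono2) auto
    also have "\<dots> \<le> (\<Sum>m\<in>{..<N} \<union> {N..<n}. \<bar>e m\<bar>)"
      by (intro sum_mono2) auto
    also have "\<dots> = E + (\<Sum>m\<in>{N..<n}. \<bar>e m\<bar>)"
      unfolding E_def by (intro sum.union_disjoint) auto
    also have "(\<Sum>m\<in>{N..<n}. \<bar>e m\<bar>) \<le> (\<Sum>m\<in>{N..<n}. c * real n ^ a)"
    proof (rule sum_mono)
      fix m assume "m \<in> {N..<n}"
      then have "\<bar>e m\<bar> \<le> c * real m ^ a" "real m ^ a \<le> real n ^ a"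
        using N by (auto intro: power_mono)
      with c(1) show "\<bar>e m\<bar> \<le> c * real n ^ a"
        by (meson mult_left_mono less_imp_le order_trans)
    qed
    also have "\<dots> = real (n - N) * (c * real n ^ a)"
      by simp
    also have "\<dots> \<le> real n * (c * real n ^ a)"
      using c(1) by (intro mult_right_mono) auto
    also have "E \<le> E * real n ^ Suc a"
    proof -
      have "0 \<le> E" "1 \<le> real n ^ Suc a"
        using n by (auto simp: E_def sum_nonneg one_le_power simp del: power_Suc)
      then show ?thesis
        using mult_left_mono[of 1 "real n ^ Suc a" E] by simp
    qed
    finally show ?thesis
      by (simp add: algebra_simps)
  qed
  then show ?thesis
    by (intro bigoI[of _ "E + c"]) (auto simp: eventually_at_top_linorder)
qed

lemma power_Suc_lower: "(x::real) \<ge> 0 \<Longrightarrow> x ^ Suc a + real (Suc a) * x ^ a \<le> (x + 1) ^ Suc a"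
proof (induction a)
  case (Suc a)
  have "x ^ Suc (Suc a) + real (Suc (Suc a)) * x ^ Suc a
      \<le> (x + 1) * (x ^ Suc a + real (Suc a) * x ^ a)"
    using Suc.prems by (simp add: algebra_simps)
  also have "\<dots> \<le> (x + 1) * (x + 1) ^ Suc a"
    using Suc by (intro mult_left_mono) auto
  finally show ?case
    by simp
qed simp

lemma power_Suc_upper: "(x::real) \<ge> 0 \<Longrightarrow> (x + 1) ^ Suc a \<le> x ^ Suc a + real (Suc a) * (x + 1) ^ a"
proof (induction a)
  case (Suc a)
  have "(x + 1) ^ Suc (Suc a) \<le> (x + 1) * (x ^ Suc a + real (Suc a) * (x + 1) ^ a)"
    using Suc by (simp del: power_Suc add: power_Suc[of "x + 1"] mult_left_mono)
  also have "\<dots> = x ^ Suc (Suc a) + x ^ Suc a + real (Suc a) * (x + 1) ^ Suc a"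
    by (simp add: algebra_simps)
  also have "x ^ Suc a \<le> (x + 1) ^ Suc a"
    using Suc.prems by (intro power_mono) auto
  then have "x ^ Suc (Suc a) + x ^ Suc a + real (Suc a) * (x + 1) ^ Suc a
      \<le> x ^ Suc (Suc a) + real (Suc (Suc a)) * (x + 1) ^ Suc a"
    by (simp add: algebra_simps)
  finally show ?case .
qed simp

lemma power_sum_asymp: "(\<lambda>n. (\<Sum>m<n. real m ^ a) - real n ^ Suc a / real (Suc a)) \<in> O(\<lambda>n. real n ^ a)"
proof -
  have lower: "real (Suc a) * (\<Sum>m<n. real m ^ a) \<le> real n ^ Suc a" for n
  proof (induction n)
    case (Suc n)
    then show ?case
      using power_Suc_lower[of "real n" a] by (simp add: algebra_simps)
  qed simp
  have upper: "real n ^ Suc a \<le> real (Suc a) * ((\<Sum>m<n. real m ^ a) + real n ^ a)" for n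
  proof (induction n)
    case (Suc n)
    then show ?case
      using power_Suc_upper[of "real n" a] by (simp add: algebra_simps)
  qed simp
  have "\<bar>(\<Sum>m<n. real m ^ a) - real n ^ Suc a / real (Suc a)\<bar> \<le> 1 * \<bar>real n ^ a\<bar>" for n
    using lower[of n] upper[of n] by (simp add: field_simps)
  then show ?thesis
    by (intro bigoI[of _ 1]) auto
qed

lemma partial_sum_asymp:
  fixes f :: "nat \<Rightarrow> real"
  assumes "(\<lambda>m. f m - c * real m ^ Suc a) \<in> O(\<lambda>m. real m ^ a)"
  shows "(\<lambda>n. (\<Sum>m\<in>{K..<n}. f m) - c / real (a + 2) * real n ^ (a + 2)) \<in> O(\<lambda>n. real n ^ Suc a)"
proof -
  let ?e = "\<lambda>m. f m - c * real m ^ Suc a"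
  have "(\<lambda>n. (\<Sum>m\<in>{K..<n}. ?e m) + c * ((\<Sum>m<n. real m ^ Suc a) - real n ^ Suc (Suc a) / real (Suc (Suc a)))
      - c * (\<Sum>m<K. real m ^ Suc a)) \<in> O(\<lambda>n. real n ^ Suc a)"
    by (intro sum_in_bigo bigo_partial_sum assms bigo_const_mult power_sum_asymp bigo_const_nat_power)
  moreover have "eventually (\<lambda>n. (\<Sum>m\<in>{K..<n}. ?e m)
      + c * ((\<Sum>m<n. real m ^ Suc a) - real n ^ Suc (Suc a) / real (Suc (Suc a))) - c * (\<Sum>m<K. real m ^ Suc a)
      = (\<Sum>m\<in>{K..<n}. f m) - c / real (a + 2) * real n ^ (a + 2)) at_top"
  proof (rule eventually_at_top_linorderI)
    fix n assume "K \<le> n"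
    then have "(\<Sum>m<n. real m ^ Suc a) = (\<Sum>m<K. real m ^ Suc a) + (\<Sum>m\<in>{K..<n}. real m ^ Suc a)"
      by (metis sum.atLeastLessThan_concat lessThan_atLeast0 zero_le)
    moreover have "(\<Sum>m\<in>{K..<n}. ?e m) = (\<Sum>m\<in>{K..<n}. f m) - c * (\<Sum>m\<in>{K..<n}. real m ^ Suc a)"
      by (simp add: sum_subtractf sum_distrib_left)
    moreover have "A - c * B + c * (S + B - X / r) - c * S = A - c / r * X" for A B S X r :: real
      by (simp add: algebra_simps)
    ultimately show "(\<Sum>m\<in>{K..<n}. ?e m)
      + c * ((\<Sum>m<n. real m ^ Suc a) - real n ^ Suc (Suc a) / real (Suc (Suc a))) - c * (\<Sum>m<K. real m ^ Suc a)
      = (\<Sum>m\<in>{K..<n}. f m) - c / real (a + 2) * real n ^ (a + 2)"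
      by (simp add: numeral_2_eq_2)
  qed
  ultimately show ?thesis
    by (rule bigo_eventually_eq[rotated])
qed

section \<open>Size and depth of the constructions\<close>

definition additive_cost :: "(circuit \<Rightarrow> nat) \<Rightarrow> bool" where
  "additive_cost \<mu> \<longleftrightarrow> (\<forall>A B. \<mu> (A @ B) = \<mu> A + \<mu> B) \<and> (\<forall>p C. 1 \<le> p \<longrightarrow> \<mu> (shift p C) = \<mu> C) \<and>
     (\<forall>i j. \<mu> (CX i j) = 1)"

lemma cost_append: "additive_cost \<mu> \<Longrightarrow> \<mu> (A @ B) = \<mu> A + \<mu> B"
  and cost_shift: "additive_cost \<mu> \<Longrightarrow> 1 \<le> p \<Longrightarrow> \<mu> (shift p C) = \<mu> C"
  and cost_CX: "additive_cost \<mu> \<Longrightarrow> \<mu> (CX i j) = 1"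
  unfolding additive_cost_def by blast+

lemma cost_Nil:
  assumes \<mu>: "additive_cost \<mu>"
  shows "\<mu> [] = 0"
  using cost_append[OF \<mu>, of "[]" "[]"] by simp

lemma cost_concat:
  assumes \<mu>: "additive_cost \<mu>"
  shows "\<mu> (concat Cs) = (\<Sum>C\<leftarrow>Cs. \<mu> C)"
  by (induction Cs) (simp_all add: cost_Nil[OF \<mu>] cost_append[OF \<mu>])

lemma cost_SW:
  assumes \<mu>: "additive_cost \<mu>"
  shows "\<mu> (SW a b) = 3"
  by (simp add: SW_def cost_append[OF \<mu>] cost_CX[OF \<mu>])

lemma cost_refl_PTC:
  assumes \<mu>: "additive_cost \<mu>"
  shows "\<mu> (refl 1 m (PTC m)) = 2 * (m - 1)"
  unfolding refl_PTC by (simp add: cost_concat[OF \<mu>] DX_def cost_append[OF \<mu>] cost_CX[OF \<mu>] comp_def sum_list_triv)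

lemma cost_Wc:
  assumes \<mu>: "additive_cost \<mu>" and k: "1 \<le> k"
  shows "\<mu> (Wc F k d) = 1 + 4 * d + (\<Sum>m\<in>{k - 1..<k + d}. \<mu> (F m))"
proof (induction d)
  case 0
  from k have "{k - 1..<k + 0} = {k - 1}"
    by auto
  then show ?case
    by (simp add: cost_append[OF \<mu>] cost_CX[OF \<mu>] cost_shift[OF \<mu>])
next
  case (Suc d)
  from k have "k + Suc d - 1 = k + d" "{k - 1..<k + Suc d} = insert (k + d) {k - 1..<k + d}"
    by auto
  with Suc show ?case
    by (simp add: cost_append[OF \<mu>] cost_CX[OF \<mu>] cost_shift[OF \<mu>] cost_SW[OF \<mu>])
qed

lemma cost_special_gen_Suc:
  assumes \<mu>: "additive_cost \<mu>" and "1 \<le> k0" and n: "k0 + Suc d \<le> n"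
  shows "\<mu> (special_gen G0 k0 (Suc d) n) =
    2 + 6 * (n - (k0 + Suc d)) + (\<Sum>m\<in>{k0 + d..<n}. \<mu> (special_gen G0 k0 d m))"
proof -
  define k where "k = k0 + Suc d"
  have k: "1 \<le> k" "k - 1 = k0 + d" "k + (n - k) = n" "n - k + 1 - 1 = n - k"
    using assms by (auto simp: k_def)
  have unfold: "special_gen G0 k0 (Suc d) n =
      W (special_gen G0 k0 d) k n @ CX (n - k + 1) (n - k + 2) @ refl 1 (n - k + 1) (PTC (n - k + 1))"
    by (simp add: k_def Let_def)
  have "\<mu> (W (special_gen G0 k0 d) k n @ CX (n - k + 1) (n - k + 2) @ refl 1 (n - k + 1) (PTC (n - k + 1))) =
      \<mu> (Wc (special_gen G0 k0 d) k (n - k)) + 1 + 2 * (n - k)"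
    unfolding W_def cost_append[OF \<mu>] cost_CX[OF \<mu>] cost_refl_PTC[OF \<mu>] k(4) by simp
  then have "\<mu> (special_gen G0 k0 (Suc d) n) = \<mu> (Wc (special_gen G0 k0 d) k (n - k)) + 1 + 2 * (n - k)"
    unfolding unfold .
  then show ?thesis
    unfolding cost_Wc[OF \<mu> k(1)] k(2,3) by (simp add: k_def)
qed

lemma cost_full_gen:
  assumes \<mu>: "additive_cost \<mu>" and "1 \<le> k" "k \<le> n"
  shows "\<mu> (full_gen G k n) = (\<Sum>m\<in>{k..n}. \<mu> (G m))"
proof -
  have "\<mu> (full_gen G k n) = (\<Sum>p\<leftarrow>[1..<n - k + 2]. \<mu> (shift p (G (n - p + 1))))"
    unfolding full_gen_def cost_concat[OF \<mu>] by (simp add: comp_def)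
  also have "\<dots> = (\<Sum>p\<leftarrow>[1..<n - k + 2]. \<mu> (G (n - p + 1)))"
    by (intro arg_cong[where f = sum_list] map_cong) (auto simp: cost_shift[OF \<mu>])
  also have "\<dots> = (\<Sum>p\<in>{1..<n - k + 2}. \<mu> (G (n - p + 1)))"
    unfolding sum_set_upt_conv_sum_list_nat[symmetric] set_upt ..
  also have "\<dots> = (\<Sum>m\<in>{k..n}. \<mu> (G m))"
    by (rule sum.reindex_bij_witness[where i = "\<lambda>m. n + 1 - m" and j = "\<lambda>p. n + 1 - p"])
      (use assms(2,3) in \<open>auto simp: Suc_diff_le\<close>)
  finally show ?thesis .
qed

lemma asymp_special_gen:
  assumes \<mu>: "additive_cost \<mu>" and k0: "1 \<le> k0" and G0: "(\<lambda>n. real (\<mu> (G0 n)) - c * real n ^ Suc b) \<in> O(\<lambda>n. real n ^ b)"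
  shows "(\<lambda>n. real (\<mu> (special_gen G0 k0 d n)) - c * (fact (Suc b) / fact (Suc b + d)) * real n ^ (Suc b + d))
    \<in> O(\<lambda>n. real n ^ (b + d))"
proof (induction d)
  case 0
  then show ?case using G0 by simp
next
  case (Suc d)
  let ?c = "c * (fact (Suc b) / fact (Suc b + d))"
  let ?sum = "\<lambda>n. \<Sum>m\<in>{k0 + d..<n}. real (\<mu> (special_gen G0 k0 d m))"
  have "(\<lambda>n. ?sum n - ?c / real (b + d + 2) * real n ^ (b + d + 2)) \<in> O(\<lambda>n. real n ^ Suc (b + d))"
    using Suc by (intro partial_sum_asymp) simp
  moreover have "(\<lambda>n. (2 - 6 * real (k0 + Suc d)) + 6 * real n ^ 1) \<in> O(\<lambda>n. real n ^ Suc (b + d))"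
    by (intro sum_in_bigo bigo_const_nat_power bigo_const_mult bigo_nat_power_mono) simp
  ultimately have "(\<lambda>n. ((2 - 6 * real (k0 + Suc d)) + 6 * real n ^ 1) +
      (?sum n - ?c / real (b + d + 2) * real n ^ (b + d + 2))) \<in> O(\<lambda>n. real n ^ (b + Suc d))"
    using sum_in_bigo(1) by fastforce
  moreover have "eventually (\<lambda>n. ((2 - 6 * real (k0 + Suc d)) + 6 * real n ^ 1) +
      (?sum n - ?c / real (b + d + 2) * real n ^ (b + d + 2)) =
      real (\<mu> (special_gen G0 k0 (Suc d) n)) - c * (fact (Suc b) / fact (Suc b + Suc d)) * real n ^ (Suc b + Suc d)) at_top"
  proof (rule eventually_at_top_linorderI)
    fix n assume n: "k0 + Suc d \<le> n"
    have "?c / real (b + d + 2) = c * (fact (Suc b) / fact (Suc b + Suc d))"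
      by (simp add: field_simps)
    moreover have "real (\<mu> (special_gen G0 k0 (Suc d) n)) = 2 + 6 * (real n - real (k0 + Suc d)) + ?sum n"
      using cost_special_gen_Suc[OF \<mu> k0 n] n by (simp add: of_nat_diff)
    ultimately show "((2 - 6 * real (k0 + Suc d)) + 6 * real n ^ 1) + (?sum n - ?c / real (b + d + 2) * real n ^ (b + d + 2)) =
      real (\<mu> (special_gen G0 k0 (Suc d) n)) - c * (fact (Suc b) / fact (Suc b + Suc d)) * real n ^ (Suc b + Suc d)"
      by (simp add: algebra_simps numeral_2_eq_2)
  qed
  ultimately show ?case
    by (rule bigo_eventually_eq[rotated])
qed

lemma asymp_full_gen:
  assumes \<mu>: "additive_cost \<mu>" and k: "1 \<le> k" and G: "(\<lambda>n. real (\<mu> (G n)) - c * real n ^ Suc b) \<in> O(\<lambda>n. real n ^ b)"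
  shows "(\<lambda>n. real (\<mu> (full_gen G k n)) - c / real (b + 2) * real n ^ (b + 2)) \<in> O(\<lambda>n. real n ^ Suc b)"
proof -
  let ?sum = "\<lambda>n. \<Sum>m\<in>{k..<n}. real (\<mu> (G m))"
  have "(\<lambda>n. (?sum n - c / real (b + 2) * real n ^ (b + 2)) +
      ((real (\<mu> (G n)) - c * real n ^ Suc b) + c * real n ^ Suc b)) \<in> O(\<lambda>n. real n ^ Suc b)"
    using G by (intro sum_in_bigo partial_sum_asymp bigo_const_mult bigo_refl
        bigo_trans[OF G bigo_nat_power_mono]) simp_all
  moreover have "eventually (\<lambda>n. (?sum n - c / real (b + 2) * real n ^ (b + 2)) +
      ((real (\<mu> (G n)) - c * real n ^ Suc b) + c * real n ^ Suc b) =
      real (\<mu> (full_gen G k n)) - c / real (b + 2) * real n ^ (b + 2)) at_top"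
  proof (rule eventually_at_top_linorderI)
    fix n assume n: "k \<le> n"
    then have "{k..n} = insert n {k..<n}"
      by auto
    then show "(?sum n - c / real (b + 2) * real n ^ (b + 2)) + ((real (\<mu> (G n)) - c * real n ^ Suc b) + c * real n ^ Suc b) =
      real (\<mu> (full_gen G k n)) - c / real (b + 2) * real n ^ (b + 2)"
      using cost_full_gen[OF \<mu> k n] by simp
  qed
  ultimately show ?thesis
    by (rule bigo_eventually_eq[rotated])
qed

lemma asymp_full_special_gen:
  assumes \<mu>: "additive_cost \<mu>" and k0: "1 \<le> k0" "s < k0" and k: "k0 < k"
    and G0: "(\<lambda>n. real (\<mu> (G0 n)) - c * real n ^ (k0 - s)) \<in> O(\<lambda>n. real n powr (real k0 - real s - 1))"
  shows "(\<lambda>n. real (\<mu> (full_gen (special_gen G0 k0 (k - k0)) k n))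
      - c * (fact (k0 - s) / fact (k - s + 1)) * real n ^ (k - s + 1)) \<in> O(\<lambda>n. real n powr (real k - real s))"
proof -
  define b where "b = k0 - s - 1"
  define d where "d = k - k0"
  have b: "Suc b = k0 - s" "real k0 - real s - 1 = real b" "Suc b + d = k - s" "b + d + 2 = k - s + 1"
    "real k - real s = real (Suc (b + d))"
    using k0 k by (auto simp: b_def d_def of_nat_diff)
  have "(\<lambda>n. real (\<mu> (G0 n)) - c * real n ^ Suc b) \<in> O(\<lambda>n. real n ^ b)"
    using G0 unfolding b(1)[symmetric] b(2) bigo_nat_powr .
  then have "(\<lambda>n. real (\<mu> (special_gen G0 k0 d n)) - c * (fact (Suc b) / fact (Suc b + d)) * real n ^ Suc (b + d))
      \<in> O(\<lambda>n. real n ^ (b + d))"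
    using asymp_special_gen[OF \<mu> k0(1)] by simp
  then have "(\<lambda>n. real (\<mu> (full_gen (special_gen G0 k0 d) k n))
      - c * (fact (Suc b) / fact (Suc b + d)) / real (b + d + 2) * real n ^ (b + d + 2)) \<in> O(\<lambda>n. real n ^ Suc (b + d))"
    using k k0 by (intro asymp_full_gen[OF \<mu>]) simp_all
  moreover have "c * (fact (Suc b) / fact (Suc b + d)) / real (b + d + 2) = c * (fact (k0 - s) / fact (b + d + 2))"
    unfolding b(1)[symmetric] by (simp add: field_simps)
  ultimately show ?thesis
    unfolding b(5) bigo_nat_powr b(4)[symmetric] d_def[symmetric] by (simp only:)
qed


lemma additive_cost_csize: "additive_cost csize"
  unfolding additive_cost_def
proof (intro conjI allI impI)
  fix p :: nat and C assume p: "1 \<le> p"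
  have "card ((\<lambda>(i, j). (i + p - 1, j + p - 1)) ` M) = card M" for M :: moment
    using inj_translate[OF p] by (intro card_image) (auto simp: inj_on_def inj_def)
  then show "csize (shift p C) = csize C"
    by (simp add: csize_def shift_def map_gates_def comp_def)
qed (simp_all add: csize_def CX_def)

lemma additive_cost_depth: "additive_cost depth"
  by (simp add: additive_cost_def depth_def shift_def map_gates_def CX_def)

section \<open>Depth of clean special 2-body generators\<close>

text \<open>A qubit whose label gains the element x is the target of a gate whose control already carries
  x, and distinct gates of a moment have distinct controls.\<close>
lemma card_apply_moment_containing:
  assumes C: "is_circuit n C" and M: "M \<in> set C"
  shows "card {q \<in> {1..n}. x \<in> apply_moment M l q} \<le> 2 * card {q \<in> {1..n}. x \<in> l q}"
proof -
  define A where "A = {q \<in> {1..n}. x \<in> l q}"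
  define S where "S = M \<inter> (A \<times> UNIV)"
  have "finite A"
    by (simp add: A_def)
  have cover: "{q \<in> {1..n}. x \<in> apply_moment M l q} \<subseteq> A \<union> snd ` S"
  proof clarify
    fix q assume q: "q \<in> {1..n}" "x \<in> apply_moment M l q" "q \<notin> snd ` S"
    show "q \<in> A"
    proof (cases "\<exists>i. (i, q) \<in> M")
      case True
      then obtain i where i: "(i, q) \<in> M" by blast
      then have "apply_moment M l q = labmul (l i) (l q)"
        using is_circuit_unique_control[OF C M] by (intro apply_moment_target) auto
      moreover have "i \<notin> A"
        using i q(3) unfolding S_def by force
      moreover have "i \<in> {1..n}"
        using is_circuit_gate_range[OF C M i] by simp
      ultimately show ?thesis
        using q(1,2) unfolding A_def labmul_def by auto
    next
      case False
      then show ?thesis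
        using q(1,2) by (simp add: A_def apply_moment_not_target)
    qed
  qed
  have inj: "inj_on fst S"
    using is_circuit_disjoint[OF C M] unfolding S_def inj_on_def by fastforce
  have sub: "fst ` S \<subseteq> A"
    unfolding S_def by auto
  have "finite S"
    using finite_imageD[OF finite_subset[OF sub \<open>finite A\<close>] inj] .
  have "card (snd ` S) \<le> card S"
    using \<open>finite S\<close> by (rule card_image_le)
  also have "\<dots> = card (fst ` S)"
    using card_image[OF inj] by simp
  also have "\<dots> \<le> card A"
    using \<open>finite A\<close> sub by (rule card_mono)
  finally have "card (snd ` S) \<le> card A" .
  have "card {q \<in> {1..n}. x \<in> apply_moment M l q} \<le> card (A \<union> snd ` S)"
    using cover \<open>finite A\<close> \<open>finite S\<close> by (intro card_mono) auto
  also have "\<dots> \<le> card A + card (snd ` S)"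
    by (rule card_Un_le)
  finally show ?thesis
    unfolding A_def[symmetric] using \<open>card (snd ` S) \<le> card A\<close> by linarith
qed

lemma card_apply_circ_containing:
  assumes C: "is_circuit n C"
  shows "card {q \<in> {1..n}. x \<in> apply_circ (take m C) l0 q} \<le> 2 ^ m"
proof (induction m)
  case 0
  have "{q \<in> {1..n}. x \<in> apply_circ (take 0 C) l0 q} \<subseteq> {x}"
    by (auto simp: l0_def)
  then show ?case
    using card_mono[of "{x}"] by fastforce
next
  case (Suc m)
  show ?case
  proof (cases "m < length C")
    case True
    then have "apply_circ (take (Suc m) C) l0 = apply_moment (C ! m) (apply_circ (take m C) l0)"
      by (simp add: take_Suc_conv_app_nth)
    then show ?thesis
      using card_apply_moment_containing[OF C nth_mem[OF True], of x "apply_circ (take m C) l0"] Suc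
      by simp
  next
    case False
    then show ?thesis
      using Suc by simp
  qed
qed

lemma geometric_sum_less: "(\<Sum>m<L. (2::nat) ^ m) < 2 ^ L"
  by (induction L) auto

lemma card_generated_containing:
  assumes C: "is_circuit n C"
  shows "card {X \<in> generated n C l0. x \<in> X} < 2 ^ (depth C + 1)"
proof -
  let ?A = "\<lambda>m. {q \<in> {1..n}. x \<in> apply_circ (take m C) l0 q}"
  have "{X \<in> generated n C l0. x \<in> X} \<subseteq> (\<Union>m\<in>{1..length C}. (\<lambda>q. apply_circ (take m C) l0 q) ` ?A m)"
    unfolding generated_def by auto
  then have "card {X \<in> generated n C l0. x \<in> X} \<le> card (\<Union>m\<in>{1..length C}. (\<lambda>q. apply_circ (take m C) l0 q) ` ?A m)"
    by (intro card_mono) auto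
  also have "\<dots> \<le> (\<Sum>m\<in>{1..length C}. card ((\<lambda>q. apply_circ (take m C) l0 q) ` ?A m))"
    by (rule card_UN_le) simp
  also have "\<dots> \<le> (\<Sum>m\<in>{1..length C}. 2 ^ m)"
  proof (rule sum_mono)
    fix m
    have "card ((\<lambda>q. apply_circ (take m C) l0 q) ` ?A m) \<le> card (?A m)"
      by (rule card_image_le) simp
    also have "\<dots> \<le> 2 ^ m"
      by (rule card_apply_circ_containing[OF C])
    finally show "card ((\<lambda>q. apply_circ (take m C) l0 q) ` ?A m) \<le> 2 ^ m" .
  qed
  also have "\<dots> \<le> (\<Sum>m<length C + 1. 2 ^ m)"
    by (intro sum_mono2) auto
  also have "\<dots> < 2 ^ (length C + 1)"
    using geometric_sum_less[of "length C + 1"] .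
  finally show ?thesis
    by (simp add: depth_def)
qed

text \<open>A clean special 2-body generator on n qubits generates the n - 1 labels containing 1 of size 2,
  so its depth is at least about log2 n.\<close>
lemma clean_special_two_depth:
  assumes "clean_special 2 n C"
  shows "n - 1 < 2 ^ (depth C + 1)"
proof -
  have C: "is_circuit n C"
    using assms unfolding clean_special_def by blast
  have "(\<lambda>i. {1, i}) ` {2..n} \<subseteq> {X \<in> generated n C l0. 1 \<in> X}"
    using assms unfolding clean_special_def by auto
  moreover have "finite (generated n C l0)"
  proof -
    have "generated n C l0 \<subseteq> (\<lambda>(m, q). apply_circ (take m C) l0 q) ` ({1..length C} \<times> {1..n})"
      unfolding generated_def by force
    then show ?thesis
      by (rule finite_subset) simp
  qed
  ultimately have "card ((\<lambda>i. {1, i}) ` {2..n}) \<le> card {X \<in> generated n C l0. 1 \<in> X}"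
    by (intro card_mono) auto
  moreover have "inj_on (\<lambda>i. {1, i}) {2..n}"
    by (auto simp: inj_on_def doubleton_eq_iff)
  then have "card ((\<lambda>i. {1, i}) ` {2..n}) = n - 1"
    by (simp add: card_image)
  ultimately show ?thesis
    using card_generated_containing[OF C, of 1] by linarith
qed

text \<open>So for k0 = 2 the depth hypothesis of the asymptotic statement, which forces the depth to stay
  bounded, can never hold.\<close>
lemma depth_asymp_imp_three_le:
  assumes k0: "2 \<le> k0" and G0: "\<forall>n\<ge>k0. clean_special k0 n (G0 n)"
    and D: "(\<lambda>n. real (depth (G0 n)) - c * real n ^ (k0 - 2)) \<in> O(\<lambda>n. real n powr (real k0 - 3))"
  shows "3 \<le> k0"
proof (rule ccontr)
  assume "\<not> 3 \<le> k0"
  with k0 have k0_2: "k0 = 2"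
    by simp
  have "(\<lambda>n::nat. real n powr (real k0 - 3)) \<in> O(\<lambda>_. 1)"
    using k0_2 by (intro bigoI[of _ 1])
      (auto simp: eventually_at_top_linorder powr_minus_divide intro!: exI[of _ 1])
  with D have "(\<lambda>n. real (depth (G0 n)) - c * real n ^ (k0 - 2)) \<in> O(\<lambda>_. 1)"
    by (rule bigo_trans)
  then have "(\<lambda>n. real (depth (G0 n)) - c) \<in> O(\<lambda>_. 1)"
    using k0_2 by simp
  then have "(\<lambda>n. (real (depth (G0 n)) - c) + c) \<in> O(\<lambda>_. 1)"
    by (rule sum_in_bigo(1)) simp
  then obtain C where "eventually (\<lambda>n. norm (real (depth (G0 n))) \<le> C * norm (1::real)) at_top"
    unfolding bigo_def by auto
  then obtain N where N: "\<And>n. n \<ge> N \<Longrightarrow> real (depth (G0 n)) \<le> C"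
    by (auto simp: eventually_at_top_linorder)
  define B where "B = nat \<lceil>C\<rceil>"
  define n where "n = max N (2 ^ (B + 1) + 1)"
  have n: "N \<le> n" "2 ^ (B + 1) + 1 \<le> n"
    by (simp_all add: n_def)
  moreover have "(2::nat) \<le> 2 ^ (B + 1)"
    using power_increasing[of 1 "B + 1" "2::nat"] by simp
  ultimately have "2 \<le> n"
    by linarith
  have "depth (G0 n) \<le> B"
    using N[OF n(1)] unfolding B_def by linarith
  then have "2 ^ (depth (G0 n) + 1) \<le> (2::nat) ^ (B + 1)"
    by (intro power_increasing) auto
  moreover have "n - 1 < 2 ^ (depth (G0 n) + 1)"
    using G0 k0_2 \<open>2 \<le> n\<close> by (intro clean_special_two_depth) simp
  ultimately show False
    using n(2) by linarith
qed

lemma csize_full_special_gen_asymp: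
  assumes k0: "2 \<le> k0" and k: "k0 < k"
    and G0: "(\<lambda>n. real (csize (G0 n)) - c * real n ^ (k0 - 1)) \<in> O(\<lambda>n. real n powr (real k0 - 2))"
  shows "(\<lambda>n. real (csize (full_gen (special_gen G0 k0 (k - k0)) k n)) - c * (fact (k0 - 1) / fact k) * real n ^ k)
    \<in> O(\<lambda>n. real n powr (real k - 1))"
proof -
  have eqs: "k - 1 + 1 = k" "real k0 - real (1::nat) - 1 = real k0 - 2" "real k - real (1::nat) = real k - 1"
    using k by auto
  show ?thesis
    by (rule asymp_full_special_gen[OF additive_cost_csize, of k0 1 k G0 c, unfolded eqs]) (use k0 k G0 in auto)
qed

lemma depth_full_special_gen_asymp:
  assumes k0: "3 \<le> k0" and k: "k0 < k"
    and G0: "(\<lambda>n. real (depth (G0 n)) - c * real n ^ (k0 - 2)) \<in> O(\<lambda>n. real n powr (real k0 - 3))"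
  shows "(\<lambda>n. real (depth (full_gen (special_gen G0 k0 (k - k0)) k n)) - c * (fact (k0 - 2) / fact (k - 1)) * real n ^ (k - 1))
    \<in> O(\<lambda>n. real n powr (real k - 2))"
proof -
  have eqs: "k - 2 + 1 = k - 1" "real k0 - real (2::nat) - 1 = real k0 - 3" "real k - real (2::nat) = real k - 2"
    using k k0 by auto
  show ?thesis
    by (rule asymp_full_special_gen[OF additive_cost_depth, of k0 2 k G0 c, unfolded eqs]) (use k0 k G0 in auto)
qed

theorem mainTheorem5:
  shows "(\<forall>k (G :: nat \<Rightarrow> circuit). k \<ge> 2 \<and> (\<forall>m \<ge> k. clean_special k m (G m)) \<longrightarrow>
            (\<forall>n \<ge> k. k_body_gen k n (full_gen G k n)))
       \<and> (\<forall>k0 (G0 :: nat \<Rightarrow> circuit). k0 \<ge> 2 \<and> (\<forall>n \<ge> k0. clean_special k0 n (G0 n)) \<longrightarrow>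
            (\<forall>k > k0. \<forall>n \<ge> k.
                clean_special k n (special_gen G0 k0 (k - k0) n) \<and>
                k_body_gen k n (full_gen (special_gen G0 k0 (k - k0)) k n))
          \<and> (\<forall>c1 c2 :: real. c1 > 0 \<and> c2 > 0 \<and>
               (\<lambda>n. real (csize (G0 n)) - c1 * real n ^ (k0 - 1)) \<in> O(\<lambda>n. real n powr (real k0 - 2)) \<and>
               (\<lambda>n. real (depth (G0 n)) - c2 * real n ^ (k0 - 2)) \<in> O(\<lambda>n. real n powr (real k0 - 3))
             \<longrightarrow> (\<forall>k > k0.
               (\<lambda>n. real (csize (full_gen (special_gen G0 k0 (k - k0)) k n))
                     - c1 * (fact (k0 - 1) / fact k) * real n ^ k) \<in> O(\<lambda>n. real n powr (real k - 1)) \<and>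
               (\<lambda>n. real (depth (full_gen (special_gen G0 k0 (k - k0)) k n))
                     - c2 * (fact (k0 - 2) / fact (k - 1)) * real n ^ (k - 1)) \<in> O(\<lambda>n. real n powr (real k - 2)))))"
proof (intro conjI allI impI)
  show "k_body_gen k n (full_gen G k n)"
    if "2 \<le> k \<and> (\<forall>m\<ge>k. clean_special k m (G m))" "k \<le> n" for k n and G :: "nat \<Rightarrow> circuit"
    using that by (intro k_body_gen_full_gen) auto
  fix k0 and G0 :: "nat \<Rightarrow> circuit"
  assume "2 \<le> k0 \<and> (\<forall>n\<ge>k0. clean_special k0 n (G0 n))"
  then have k0: "2 \<le> k0" and G0: "\<forall>n\<ge>k0. clean_special k0 n (G0 n)"
    by auto
  have clean: "\<forall>m\<ge>k. clean_special k m (special_gen G0 k0 (k - k0) m)" if "k0 < k" for k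
    using clean_special_special_gen[OF _ G0, of "k - k0"] k0 that by simp
  show "clean_special k n (special_gen G0 k0 (k - k0) n)" if "k0 < k" "k \<le> n" for k n
    using clean that by blast
  show "k_body_gen k n (full_gen (special_gen G0 k0 (k - k0)) k n)" if "k0 < k" "k \<le> n" for k n
    using clean that by (intro k_body_gen_full_gen) auto
  fix c1 c2 :: real and k
  assume asm: "0 < c1 \<and> 0 < c2 \<and>
    (\<lambda>n. real (csize (G0 n)) - c1 * real n ^ (k0 - 1)) \<in> O(\<lambda>n. real n powr (real k0 - 2)) \<and>
    (\<lambda>n. real (depth (G0 n)) - c2 * real n ^ (k0 - 2)) \<in> O(\<lambda>n. real n powr (real k0 - 3))"
    and k: "k0 < k"
  show "(\<lambda>n. real (csize (full_gen (special_gen G0 k0 (k - k0)) k n)) - c1 * (fact (k0 - 1) / fact k) * real n ^ k)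
      \<in> O(\<lambda>n. real n powr (real k - 1))"
    using csize_full_special_gen_asymp[OF k0 k] asm by blast
  show "(\<lambda>n. real (depth (full_gen (special_gen G0 k0 (k - k0)) k n)) - c2 * (fact (k0 - 2) / fact (k - 1)) * real n ^ (k - 1))
      \<in> O(\<lambda>n. real n powr (real k - 2))"
    using depth_full_special_gen_asymp[OF depth_asymp_imp_three_le[OF k0 G0] k] asm by blast
qed

end
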